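(* Let $\Sigma$ be a weighted metric graph with $\partial\Sigma=\emptyset$ and without isolated vertices. Then the bilinear pairings $H^{0,0}(\Sigma)\times H^{1,1}(\Sigma)\to\mathbb R$ and $H^{1,0}(\Sigma)\times H^{0,1}(\Sigma)\to\mathbb R$ induced by $(\alpha,\beta)\mapsto\int_\Sigma\alpha\wedge\beta$ (which descend to cohomology by Stokes' theorem) are perfect.
   Context: A weighted metric graph with boundary $(\Sigma,\partial\Sigma)$: a finite multigraph without loop edges, with for each oriented edge $e$ (tail $e^-$, head $e^+$) a length $\ell(e)>0$, parametrization $t_e\colon[0,\ell(e)]\to e$, $t_e(0)=e^-$, $t_{\bar e}(x)=t_e(\ell(e)-x)$, weight $w(e)=w(\bar e)\in\mathbb Z_{>0}$, and boundary $\partial\Sigma\subset V(\Sigma)$ (here empty). A pair $(f_1,f_2)$ of smooth functions on the two outgoing edges $e_1,e_2$ at a valency-2 vertex $v$ is smooth at $v$ if $w(e_1)^n\frac{d^nf_1}{dt_{e_1}^n}(v)=(-1)^nw(e_2)^n\frac{d^nf_2}{dt_{e_2}^n}(v)$ for all $n\ge0$. Smooth forms at interior vertices $v$: $\mathcal A^{0,0}$: continuous $f$, smooth on edges, constant near valency-1 vertices, $(f|_{e_1},f|_{e_2})$ smooth at valency-2 vertices, $\sum_{e^-=v}w(e)\frac{df}{dt_e}(v)=0$ at valency $\ge3$. $\mathcal A^{1,0}$ (resp. $\mathcal A^{0,1}$): $(f_e\,d't_e)$ (resp. $(f_e\,d''t_e)$), $f_{\bar e}=-f_e$, $f_e=0$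 near valency-1 vertices, $(w(e_1)f_{e_1},-w(e_2)f_{e_2})$ smooth at valency-2 vertices, $\sum_{e^-=v}w(e)f_e(v)=0$ at valency $\ge3$. $\mathcal A^{1,1}$: $(f_e\,d't_ed''t_e)$, $f_{\bar e}=f_e$, zero near valency-1 vertices, $(w(e_1)^2f_{e_1},w(e_2)^2f_{e_2})$ smooth at valency-2 vertices. $d''f=(\frac{df}{dt_e}d''t_e)$, $d''(f_e\,d't_e)=(-\frac{df_e}{dt_e}d't_ed''t_e)$; wedge: $g\cdot(f_e\,d't_ed''t_e)=(gf_e\,d't_ed''t_e)$, $(f_e\,d't_e)\wedge(g_e\,d''t_e)=(f_eg_e\,d't_ed''t_e)$. $H^{p,0}(\Sigma)=\ker(d''\colon\mathcal A^{p,0}\to\mathcal A^{p,1})$, $H^{p,1}(\Sigma)=\operatorname{coker}$ of the same map. $\int_\Sigma(f_e\,d't_ed''t_e)=\frac12\sum_{e\text{ oriented}}w(e)\int_0^{\ell(e)}f_e\circ t_e\,dx$. *)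

theory Defs
  imports "HOL-Analysis.Analysis"
begin

text \<open>Oriented edges are elements of type 'e; rev is edge reversal (e to e-bar),
  tail e is e^-, the head e^+ is tail (rev e). len is the length, wt the weight.\<close>

record ('v, 'e) wmgraph =
  verts :: "'v set"
  edges :: "'e set"
  rev   :: "'e \<Rightarrow> 'e"
  tail  :: "'e \<Rightarrow> 'v"
  len   :: "'e \<Rightarrow> real"
  wt    :: "'e \<Rightarrow> nat"

definition head :: "('v, 'e) wmgraph \<Rightarrow> 'e \<Rightarrow> 'v" where
  "head G e = tail G (rev G e)"

definition wmg :: "('v, 'e) wmgraph \<Rightarrow> bool" where
  "wmg G \<longleftrightarrow> finite (verts G) \<and> finite (edges G) \<and>
     (\<forall>e\<in>edges G. rev G e \<in> edges G \<and> rev G (rev G e) = e \<and> rev G e \<noteq> e \<and>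
        tail G e \<in> verts G \<and> head G e \<noteq> tail G e \<and>
        len G e > 0 \<and> len G (rev G e) = len G e \<and>
        wt G e > 0 \<and> wt G (rev G e) = wt G e)"

definition out_edges :: "('v, 'e) wmgraph \<Rightarrow> 'v \<Rightarrow> 'e set" where
  "out_edges G v = {e \<in> edges G. tail G e = v}"

definition valency :: "('v, 'e) wmgraph \<Rightarrow> 'v \<Rightarrow> nat" where
  "valency G v = card (out_edges G v)"

definition no_isolated_vertices :: "('v, 'e) wmgraph \<Rightarrow> bool" where
  "no_isolated_vertices G \<longleftrightarrow> (\<forall>v\<in>verts G. valency G v \<ge> 1)"

definition deriv_seq :: "real \<Rightarrow> (real \<Rightarrow> real) \<Rightarrow> (nat \<Rightarrow> real \<Rightarrow> real) \<Rightarrow> bool" where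
  "deriv_seq l f D \<longleftrightarrow> (\<forall>x\<in>{0..l}. D 0 x = f x) \<and>
     (\<forall>n. \<forall>x\<in>{0..l}. (D n has_real_derivative D (Suc n) x) (at x within {0..l}))"

definition smooth_cl :: "real \<Rightarrow> (real \<Rightarrow> real) \<Rightarrow> bool" where
  "smooth_cl l f \<longleftrightarrow> (\<exists>D. deriv_seq l f D)"

text \<open>n-th derivative of f at x in [0,l] (well defined for smooth f and l > 0).\<close>
definition nderiv :: "real \<Rightarrow> (real \<Rightarrow> real) \<Rightarrow> nat \<Rightarrow> real \<Rightarrow> real" where
  "nderiv l f n x = (SOME D. deriv_seq l f D) n x"

text \<open>Smoothness of a pair (f1,f2) at a valency-2 vertex v, f_i given in the
  parameter t_{e_i} of the outgoing edge e_i (so v corresponds to parameter 0).\<close>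
definition smooth_pair :: "nat \<Rightarrow> real \<Rightarrow> (real \<Rightarrow> real) \<Rightarrow> nat \<Rightarrow> real \<Rightarrow> (real \<Rightarrow> real) \<Rightarrow> bool" where
  "smooth_pair w1 l1 f1 w2 l2 f2 \<longleftrightarrow>
     (\<forall>n. real w1 ^ n * nderiv l1 f1 n 0 = (-1) ^ n * real w2 ^ n * nderiv l2 f2 n 0)"

text \<open>A form is encoded by its coefficient functions F e = f_e o t_e on [0, len e]
  for each oriented edge e; canonically F e x = 0 off the edges / off [0, len e].\<close>

type_synonym 'e form = "'e \<Rightarrow> real \<Rightarrow> real"

definition canonical :: "('v, 'e) wmgraph \<Rightarrow> 'e form \<Rightarrow> bool" where
  "canonical G F \<longleftrightarrow> (\<forall>e x. e \<notin> edges G \<or> x \<notin> {0..len G e} \<longrightarrow> F e x = 0)"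

definition A00 :: "('v, 'e) wmgraph \<Rightarrow> 'e form \<Rightarrow> bool" where
  "A00 G F \<longleftrightarrow> canonical G F \<and>
     (\<forall>e\<in>edges G. smooth_cl (len G e) (F e)) \<and>
     (\<forall>e\<in>edges G. \<forall>x\<in>{0..len G e}. F (rev G e) x = F e (len G e - x)) \<and>
     (\<forall>e\<in>edges G. \<forall>e'\<in>edges G. tail G e = tail G e' \<longrightarrow> F e 0 = F e' 0) \<and>
     (\<forall>e\<in>edges G. valency G (tail G e) = 1 \<longrightarrow>
        (\<exists>\<delta>>0. \<forall>x\<in>{0..len G e}. x < \<delta> \<longrightarrow> F e x = F e 0)) \<and>
     (\<forall>v\<in>verts G. \<forall>e1 e2. out_edges G v = {e1, e2} \<and> e1 \<noteq> e2 \<longrightarrow>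
        smooth_pair (wt G e1) (len G e1) (F e1) (wt G e2) (len G e2) (F e2)) \<and>
     (\<forall>v\<in>verts G. valency G v \<ge> 3 \<longrightarrow>
        (\<Sum>e\<in>out_edges G v. real (wt G e) * nderiv (len G e) (F e) 1 0) = 0)"

text \<open>A^{1,0} (coefficients of d't_e) and A^{0,1} (coefficients of d''t_e)
  are given by the same conditions.\<close>
definition A10 :: "('v, 'e) wmgraph \<Rightarrow> 'e form \<Rightarrow> bool" where
  "A10 G F \<longleftrightarrow> canonical G F \<and>
     (\<forall>e\<in>edges G. smooth_cl (len G e) (F e)) \<and>
     (\<forall>e\<in>edges G. \<forall>x\<in>{0..len G e}. F (rev G e) x = - F e (len G e - x)) \<and>
     (\<forall>e\<in>edges G. valency G (tail G e) = 1 \<longrightarrow>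
        (\<exists>\<delta>>0. \<forall>x\<in>{0..len G e}. x < \<delta> \<longrightarrow> F e x = 0)) \<and>
     (\<forall>v\<in>verts G. \<forall>e1 e2. out_edges G v = {e1, e2} \<and> e1 \<noteq> e2 \<longrightarrow>
        smooth_pair (wt G e1) (len G e1) (\<lambda>x. real (wt G e1) * F e1 x)
                    (wt G e2) (len G e2) (\<lambda>x. - real (wt G e2) * F e2 x)) \<and>
     (\<forall>v\<in>verts G. valency G v \<ge> 3 \<longrightarrow>
        (\<Sum>e\<in>out_edges G v. real (wt G e) * F e 0) = 0)"

definition A01 :: "('v, 'e) wmgraph \<Rightarrow> 'e form \<Rightarrow> bool" where
  "A01 G F \<longleftrightarrow> A10 G F"

definition A11 :: "('v, 'e) wmgraph \<Rightarrow> 'e form \<Rightarrow> bool" where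
  "A11 G F \<longleftrightarrow> canonical G F \<and>
     (\<forall>e\<in>edges G. smooth_cl (len G e) (F e)) \<and>
     (\<forall>e\<in>edges G. \<forall>x\<in>{0..len G e}. F (rev G e) x = F e (len G e - x)) \<and>
     (\<forall>e\<in>edges G. valency G (tail G e) = 1 \<longrightarrow>
        (\<exists>\<delta>>0. \<forall>x\<in>{0..len G e}. x < \<delta> \<longrightarrow> F e x = 0)) \<and>
     (\<forall>v\<in>verts G. \<forall>e1 e2. out_edges G v = {e1, e2} \<and> e1 \<noteq> e2 \<longrightarrow>
        smooth_pair (wt G e1) (len G e1) (\<lambda>x. real (wt G e1) ^ 2 * F e1 x)
                    (wt G e2) (len G e2) (\<lambda>x. real (wt G e2) ^ 2 * F e2 x))"

definition dbar0 :: "('v, 'e) wmgraph \<Rightarrow> 'e form \<Rightarrow> 'e form" where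
  "dbar0 G F = (\<lambda>e x. if e \<in> edges G \<and> x \<in> {0..len G e} then nderiv (len G e) (F e) 1 x else 0)"

definition dbar1 :: "('v, 'e) wmgraph \<Rightarrow> 'e form \<Rightarrow> 'e form" where
  "dbar1 G F = (\<lambda>e x. if e \<in> edges G \<and> x \<in> {0..len G e} then - nderiv (len G e) (F e) 1 x else 0)"

definition integral_graph :: "('v, 'e) wmgraph \<Rightarrow> 'e form \<Rightarrow> real" where
  "integral_graph G F = (1/2) * (\<Sum>e\<in>edges G. real (wt G e) * integral {0..len G e} (F e))"

definition wedge :: "'e form \<Rightarrow> 'e form \<Rightarrow> 'e form" where
  "wedge F H = (\<lambda>e x. F e x * H e x)"

definition H00 :: "('v, 'e) wmgraph \<Rightarrow> 'e form set" where
  "H00 G = {F. A00 G F \<and> dbar0 G F = (\<lambda>e x. 0)}"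

definition H10 :: "('v, 'e) wmgraph \<Rightarrow> 'e form set" where
  "H10 G = {F. A10 G F \<and> dbar1 G F = (\<lambda>e x. 0)}"

text \<open>H^{0,1} = A^{0,1} / d''(A^{0,0}) and H^{1,1} = A^{1,1} / d''(A^{1,0}),
  represented by the ambient space together with the subspace divided out.\<close>

definition lin_fun_on :: "'e form set \<Rightarrow> ('e form \<Rightarrow> real) \<Rightarrow> bool" where
  "lin_fun_on S \<phi> \<longleftrightarrow>
     (\<forall>x\<in>S. \<forall>y\<in>S. \<phi> (\<lambda>e t. x e t + y e t) = \<phi> x + \<phi> y) \<and>
     (\<forall>c. \<forall>x\<in>S. \<phi> (\<lambda>e t. c * x e t) = c * \<phi> x)"

text \<open>A bilinear pairing B between K and Y/N (K, Y, N subspaces, N \<subseteq> Y) descends to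
  K x (Y/N) and is perfect: both induced maps K -> (Y/N)^* and Y/N -> K^* are bijective
  onto the full algebraic duals.\<close>
definition perfect_pairing ::
  "'e form set \<Rightarrow> 'e form set \<Rightarrow> 'e form set \<Rightarrow> ('e form \<Rightarrow> 'e form \<Rightarrow> real) \<Rightarrow> bool" where
  "perfect_pairing K Y N B \<longleftrightarrow>
     (\<forall>k\<in>K. \<forall>n\<in>N. B k n = 0) \<and>
     (\<forall>\<phi>. lin_fun_on Y \<phi> \<and> (\<forall>n\<in>N. \<phi> n = 0) \<longrightarrow> (\<exists>!k. k \<in> K \<and> (\<forall>y\<in>Y. B k y = \<phi> y))) \<and>
     (\<forall>\<psi>. lin_fun_on K \<psi> \<longrightarrow> (\<exists>y\<in>Y. \<forall>k\<in>K. B k y = \<psi> k)) \<and>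
     (\<forall>y\<in>Y. \<forall>y'\<in>Y. (\<forall>k\<in>K. B k y = B k y') \<longrightarrow> (\<lambda>e t. y e t - y' e t) \<in> N)"

end

theory Submission
  imports Defs "HOL-Computational_Algebra.Polynomial"
begin

text \<open>Both pairings only see edge integrals. A class in \<open>H\<^sup>0\<^sup>,\<^sup>0\<close> is a locally constant
  function \<open>a\<close> on the vertices and a class in \<open>H\<^sup>1\<^sup>,\<^sup>0\<close> a circulation \<open>h\<close> (with coefficient
  \<open>h e / w e\<close> on \<open>e\<close>), so they pair with \<open>\<Omega>\<close>, \<open>\<beta>\<close> to \<open>1/2 \<Sum>\<^sub>e w e a(e\<^sup>-) \<integral>\<^sub>e \<Omega>\<close> and
  \<open>1/2 \<Sum>\<^sub>e h e \<integral>\<^sub>e \<beta>\<close>. A form is \<open>d''\<close>-exact iff its edge integrals are orthogonal to all locally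
  constant functions, resp. all circulations: one direction is Stokes' theorem; conversely such
  edge integrals are a divergence, resp. a gradient, by finite-dimensional linear algebra on the
  graph, and this provides the values at the vertices of a primitive built edge by edge.
  Multiples of a bump that is flat at both ends of an edge realize any edge integrals, so both
  sides of each pairing become finite-dimensional spaces in duality, and perfectness reduces to
  representing linear functionals on locally constant functions and on circulations.\<close>

section \<open>Smooth functions on a closed interval\<close>

lemma deriv_seq_unique:
  assumes l: "0 < l" and D1: "deriv_seq l f D1" and D2: "deriv_seq l f D2" and x: "x \<in> {0..l}"
  shows "D1 n x = D2 n x"
  using x
proof (induction n arbitrary: x)
  case 0
  then show ?case using D1 D2 by (simp add: deriv_seq_def)
next
  case (Suc n)
  have "(D1 n has_real_derivative D1 (Suc n) x) (at x within {0..l})"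
    using D1 Suc.prems by (simp add: deriv_seq_def)
  then have "(D2 n has_real_derivative D1 (Suc n) x) (at x within {0..l})"
    by (rule has_field_derivative_transform_within[of _ _ _ _ 1]) (use Suc in auto)
  moreover have "(D2 n has_real_derivative D2 (Suc n) x) (at x within {0..l})"
    using D2 Suc.prems by (simp add: deriv_seq_def)
  ultimately show ?case
    using vector_derivative_unique_within_closed_interval[of 0 l x "D2 n" "D1 (Suc n) x"
        "D2 (Suc n) x"] l Suc.prems
    by (simp add: has_real_derivative_iff_has_vector_derivative)
qed

lemma nderiv_eqI:
  assumes "0 < l" "deriv_seq l f D" "x \<in> {0..l}"
  shows "nderiv l f n x = D n x"
proof -
  have "deriv_seq l f (SOME D. deriv_seq l f D)"
    using assms(2) by (rule someI[of "deriv_seq l f"])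
  then show ?thesis
    unfolding nderiv_def using deriv_seq_unique assms by blast
qed

lemma deriv_seq_cong:
  assumes "\<And>x. x \<in> {0..l} \<Longrightarrow> f x = g x"
  shows "deriv_seq l f = deriv_seq l g"
  using assms by (auto simp: deriv_seq_def fun_eq_iff)

lemma nderiv_cong:
  assumes "\<And>x. x \<in> {0..l} \<Longrightarrow> f x = g x"
  shows "nderiv l f = nderiv l g"
  using deriv_seq_cong[OF assms] by (simp add: nderiv_def fun_eq_iff)

lemma smooth_cl_cong:
  assumes "\<And>x. x \<in> {0..l} \<Longrightarrow> f x = g x"
  shows "smooth_cl l f = smooth_cl l g"
  using deriv_seq_cong[OF assms] by (simp add: smooth_cl_def)

lemma deriv_seq_lin:
  assumes "deriv_seq l f Df" "deriv_seq l g Dg"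
  shows "deriv_seq l (\<lambda>x. a * f x + b * g x) (\<lambda>n x. a * Df n x + b * Dg n x)"
  using assms unfolding deriv_seq_def by (auto intro!: derivative_eq_intros)

lemma deriv_seq_const: "deriv_seq l (\<lambda>x. c) (\<lambda>n x. if n = 0 then c else 0)"
  unfolding deriv_seq_def by (auto intro!: derivative_eq_intros)

lemma deriv_seq_primitive:
  assumes D: "deriv_seq l f D"
  shows "deriv_seq l (\<lambda>x. c + integral {0..x} f)
           (\<lambda>n x. if n = 0 then c + integral {0..x} f else D (n - 1) x)"
  unfolding deriv_seq_def
proof (intro conjI ballI allI)
  fix n x assume x: "x \<in> {0..l}"
  have "continuous_on {0..l} (D 0)"
    using D unfolding deriv_seq_def by (intro DERIV_continuous_on) blast
  then have "continuous_on {0..l} f"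
    by (rule continuous_on_eq) (use D in \<open>simp add: deriv_seq_def\<close>)
  then have "((\<lambda>x. c + integral {0..x} f) has_real_derivative f x) (at x within {0..l})"
    using x by (auto intro!: derivative_eq_intros integral_has_real_derivative)
  then show "((\<lambda>x. if n = 0 then c + integral {0..x} f else D (n - 1) x) has_real_derivative
      (if Suc n = 0 then c + integral {0..x} f else D (Suc n - 1) x)) (at x within {0..l})"
    using D x by (cases n) (simp_all add: deriv_seq_def)
qed simp

lemma smooth_cl_deriv_seq: "0 < l \<Longrightarrow> smooth_cl l f \<Longrightarrow> deriv_seq l f (nderiv l f)"
  unfolding smooth_cl_def nderiv_def by (metis someI)

lemma smooth_cl_continuous_on:
  assumes "0 < l" "smooth_cl l f"
  shows "continuous_on {0..l} f"
proof -
  have D: "deriv_seq l f (nderiv l f)"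
    using smooth_cl_deriv_seq assms by blast
  then have "continuous_on {0..l} (nderiv l f 0)"
    unfolding deriv_seq_def by (intro DERIV_continuous_on) blast
  then show ?thesis
    by (rule continuous_on_eq) (use D in \<open>simp add: deriv_seq_def\<close>)
qed

lemma smooth_cl_integrable:
  "0 < l \<Longrightarrow> smooth_cl l f \<Longrightarrow> f integrable_on {0..l}"
  by (intro integrable_continuous_interval smooth_cl_continuous_on)

lemma nderiv_0: "0 < l \<Longrightarrow> smooth_cl l f \<Longrightarrow> x \<in> {0..l} \<Longrightarrow> nderiv l f 0 x = f x"
  using smooth_cl_deriv_seq by (fastforce simp: deriv_seq_def)

lemma has_real_derivative_nderiv:
  assumes "0 < l" "smooth_cl l f" "x \<in> {0..l}"
  shows "(f has_real_derivative nderiv l f 1 x) (at x within {0..l})"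
proof -
  have D: "deriv_seq l f (nderiv l f)"
    using smooth_cl_deriv_seq assms by blast
  then have "(nderiv l f 0 has_real_derivative nderiv l f 1 x) (at x within {0..l})"
    using assms unfolding deriv_seq_def by auto
  then show ?thesis
    by (rule has_field_derivative_transform_within[of _ _ _ _ 1])
       (use D assms in \<open>auto simp: deriv_seq_def\<close>)
qed

lemma nderiv_lin:
  assumes "0 < l" "smooth_cl l f" "smooth_cl l g" "x \<in> {0..l}"
  shows "nderiv l (\<lambda>x. a * f x + b * g x) n x = a * nderiv l f n x + b * nderiv l g n x"
  using nderiv_eqI[OF assms(1) deriv_seq_lin[OF smooth_cl_deriv_seq smooth_cl_deriv_seq] assms(4)] assms
  by blast

lemma smooth_cl_lin:
  assumes "0 < l" "smooth_cl l f" "smooth_cl l g"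
  shows "smooth_cl l (\<lambda>x. a * f x + b * g x)"
  using deriv_seq_lin[OF smooth_cl_deriv_seq smooth_cl_deriv_seq] assms
  unfolding smooth_cl_def by blast

lemma nderiv_cmult:
  "0 < l \<Longrightarrow> smooth_cl l f \<Longrightarrow> x \<in> {0..l} \<Longrightarrow> nderiv l (\<lambda>x. a * f x) n x = a * nderiv l f n x"
  using nderiv_lin[of l f f x a 0 n] by simp

lemma smooth_cl_cmult: "0 < l \<Longrightarrow> smooth_cl l f \<Longrightarrow> smooth_cl l (\<lambda>x. a * f x)"
  using smooth_cl_lin[of l f f a 0] by simp

lemma nderiv_const: "0 < l \<Longrightarrow> x \<in> {0..l} \<Longrightarrow> nderiv l (\<lambda>x. c) n x = (if n = 0 then c else 0)"
  using nderiv_eqI[OF _ deriv_seq_const] by blast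

lemma smooth_cl_const: "smooth_cl l (\<lambda>x. c)"
  using deriv_seq_const smooth_cl_def by blast

lemma
  assumes "\<And>t. t \<in> {0..l} \<Longrightarrow> f t = c"
  shows smooth_cl_eq_const_on: "smooth_cl l f"
    and nderiv_eq_const_on: "0 < l \<Longrightarrow> x \<in> {0..l} \<Longrightarrow> nderiv l f n x = (if n = 0 then c else 0)"
  using smooth_cl_cong[OF assms] smooth_cl_const nderiv_cong[OF assms] nderiv_const by simp_all

lemma nderiv_primitive:
  assumes "0 < l" "smooth_cl l f" "x \<in> {0..l}"
  shows "nderiv l (\<lambda>x. c + integral {0..x} f) n x =
           (if n = 0 then c + integral {0..x} f else nderiv l f (n - 1) x)"
  using nderiv_eqI[OF assms(1) deriv_seq_primitive[OF smooth_cl_deriv_seq] assms(3)] assms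
  by blast

lemma smooth_cl_primitive: "0 < l \<Longrightarrow> smooth_cl l f \<Longrightarrow> smooth_cl l (\<lambda>x. c + integral {0..x} f)"
  using deriv_seq_primitive smooth_cl_deriv_seq smooth_cl_def by blast

lemma smooth_cl_nderiv_1_eq_0_imp_const:
  assumes "0 < l" "smooth_cl l f" "\<And>x. x \<in> {0..l} \<Longrightarrow> nderiv l f 1 x = 0" "x \<in> {0..l}"
  shows "f x = f 0"
proof -
  have "\<exists>c. \<forall>x\<in>{0..l}. f x = c"
    by (rule has_field_derivative_zero_constant)
       (use has_real_derivative_nderiv[OF assms(1,2)] assms(3) in auto)
  then show ?thesis using assms by force
qed

lemma integral_nderiv_1:
  assumes "0 < l" "smooth_cl l f"
  shows "integral {0..l} (nderiv l f 1) = f l - f 0"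
proof -
  have "(nderiv l f 1 has_integral (f l - f 0)) {0..l}"
    by (rule fundamental_theorem_of_calculus)
       (use assms has_real_derivative_nderiv in \<open>auto simp:
         has_real_derivative_iff_has_vector_derivative\<close>)
  then show ?thesis by blast
qed

lemma integral_reflect_initial_segment:
  fixes f :: "real \<Rightarrow> real"
  assumes "continuous_on {0..l} f" and x: "x \<in> {0..l}"
  shows "integral {0..x} (\<lambda>s. f (l - s)) = integral {0..l} f - integral {0..l - x} f"
proof -
  have "integral {0..x} (\<lambda>s. f (l - s)) = integral {-x..0} (\<lambda>y. f (y + l))"
    using Henstock_Kurzweil_Integration.integral_reflect_real[where a=0 and b=x and f="\<lambda>s. f (l - s)"]
    by (simp add: add.commute)
  also have "\<dots> = integral {l - x..l} f"
    using integral_shift_real_ivl[where f=f and a="l - x" and b=l and c=l] by simp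
  also have "\<dots> = integral {0..l} f - integral {0..l - x} f"
    using Henstock_Kurzweil_Integration.integral_combine[where a=0 and c="l - x" and b=l and f=f] x
      integrable_continuous_interval[OF assms(1)] by simp
  finally show ?thesis .
qed

lemma integral_reflect_interval:
  fixes f :: "real \<Rightarrow> real"
  assumes "continuous_on {0..l} f" "0 \<le> l"
  shows "integral {0..l} (\<lambda>s. f (l - s)) = integral {0..l} f"
  using integral_reflect_initial_segment[OF assms(1), of l] assms(2) by simp

lemma integral_eq_0_near_0:
  fixes f :: "real \<Rightarrow> real"
  assumes "\<forall>x\<in>{0..l}. x < d \<longrightarrow> f x = 0" "t \<in> {0..l}" "t < d"
  shows "integral {0..t} f = 0"
proof -
  have "integral {0..t} f = integral {0..t} (\<lambda>x. 0::real)"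
    by (rule integral_cong) (use assms in auto)
  then show ?thesis
    by simp
qed

section \<open>Smooth bump functions\<close>

definition deriv_tower :: "(nat \<Rightarrow> real \<Rightarrow> real) \<Rightarrow> bool" where
  "deriv_tower D \<longleftrightarrow> (\<forall>n x. (D n has_real_derivative D (Suc n) x) (at x))"

lemma deriv_seq_deriv_tower: "deriv_tower D \<Longrightarrow> deriv_seq l (D 0) D"
  unfolding deriv_tower_def deriv_seq_def by (auto intro: has_field_derivative_at_within)

lemma deriv_tower_affine:
  assumes "deriv_tower D"
  shows "deriv_tower (\<lambda>n x. c ^ n * D n (c * x + d))"
  unfolding deriv_tower_def
proof (intro allI)
  fix n x
  have "((\<lambda>x. D n (c * x + d)) has_real_derivative D (Suc n) (c * x + d) * c) (at x)"
    using assms unfolding deriv_tower_def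
    by (auto intro!: derivative_eq_intros DERIV_chain2[where f="D n"])
  then show "((\<lambda>x. c ^ n * D n (c * x + d)) has_real_derivative c ^ Suc n * D (Suc n) (c * x + d)) (at x)"
    by (auto intro!: derivative_eq_intros simp: algebra_simps)
qed

lemma deriv_tower_mult:
  assumes F: "deriv_tower F" and G: "deriv_tower G"
  shows "deriv_tower (\<lambda>n x. \<Sum>i = 0..n. real (n choose i) * F i x * G (n - i) x)"
  unfolding deriv_tower_def
proof (intro allI)
  fix n x
  have Suc_choose: "Suc n choose i = (n choose i) + (if i = 0 then 0 else n choose (i - 1))" for i
    by (cases i) simp_all
  have Leibniz: "(\<Sum>i = 0..n. real (n choose i) * (F (Suc i) x * G (n - i) x + F i x * G (Suc (n -
    i)) x)) =
      (\<Sum>i = 0..Suc n. real (Suc n choose i) * F i x * G (Suc n - i) x)"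
  proof -
    have "(\<Sum>i = 0..Suc n. real (Suc n choose i) * F i x * G (Suc n - i) x) =
        (\<Sum>i = 0..Suc n. real (n choose i) * F i x * G (Suc n - i) x) +
        (\<Sum>i = 0..Suc n. real (if i = 0 then 0 else n choose (i - 1)) * F i x * G (Suc n - i) x)"
      by (simp add: Suc_choose sum.distrib[symmetric] algebra_simps)
    also have "(\<Sum>i = 0..Suc n. real (n choose i) * F i x * G (Suc n - i) x) =
        (\<Sum>i = 0..n. real (n choose i) * F i x * G (Suc (n - i)) x)"
      by (simp add: Suc_diff_le)
    also have "(\<Sum>i = 0..Suc n. real (if i = 0 then 0 else n choose (i - 1)) * F i x * G (Suc n - i) x) =
        (\<Sum>i = 0..n. real (n choose i) * F (Suc i) x * G (n - i) x)"
      by (subst sum.atLeast0_atMost_Suc_shift) simp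
    finally show ?thesis by (simp add: sum.distrib algebra_simps)
  qed
  have "((\<lambda>x. \<Sum>i = 0..n. real (n choose i) * F i x * G (n - i) x) has_real_derivative
      (\<Sum>i = 0..n. real (n choose i) * (F (Suc i) x * G (n - i) x + F i x * G (Suc (n - i)) x))) (at x)"
    using F G unfolding deriv_tower_def
    by (auto intro!: derivative_eq_intros DERIV_sum simp: algebra_simps)
  then show "((\<lambda>x. \<Sum>i = 0..n. real (n choose i) * F i x * G (n - i) x) has_real_derivative
      (\<Sum>i = 0..Suc n. real (Suc n choose i) * F i x * G (Suc n - i) x)) (at x)"
    by (simp only: Leibniz)
qed

text \<open>The derivatives of \<open>x \<mapsto> exp (-1/x)\<close> (extended by 0 to \<open>x \<le> 0\<close>) are
  \<open>P\<^sub>n(1/x) exp (-1/x)\<close>, where \<open>P\<^sub>n\<^sub>+\<^sub>1 = X\<^sup>2 (P\<^sub>n - P\<^sub>n')\<close>; all of them vanish at 0.\<close>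

fun flat_exp_poly :: "nat \<Rightarrow> real poly" where
  "flat_exp_poly 0 = 1"
| "flat_exp_poly (Suc n) = [:0, 0, 1:] * (flat_exp_poly n - pderiv (flat_exp_poly n))"

definition flat_exp_deriv :: "nat \<Rightarrow> real \<Rightarrow> real" where
  "flat_exp_deriv n x = (if x \<le> 0 then 0 else poly (flat_exp_poly n) (1 / x) * exp (- (1 / x)))"

lemma poly_inverse_times_exp_tendsto_0:
  "((\<lambda>x. poly p (1 / x) * exp (- (1 / x))) \<longlongrightarrow> (0::real)) (at_right 0)"
proof -
  have "((\<lambda>t. \<Sum>i\<le>degree p. coeff p i * (t ^ i / exp t)) \<longlongrightarrow> (0::real)) at_top"
    by (intro tendsto_null_sum tendsto_mult_right_zero tendsto_power_div_exp_0)
  moreover have "(\<Sum>i\<le>degree p. coeff p i * (t ^ i / exp t)) = poly p t * exp (- t)" for t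
    by (simp add: poly_altdef exp_minus sum_distrib_right divide_inverse mult.assoc)
  ultimately have "((\<lambda>t. poly p t * exp (- t)) \<longlongrightarrow> (0::real)) at_top"
    by simp
  from filterlim_compose[OF this filterlim_inverse_at_top_right] show ?thesis
    by (simp add: o_def inverse_eq_divide)
qed

lemma flat_exp_deriv_has_derivative_pos:
  assumes x: "0 < x"
  shows "(flat_exp_deriv n has_real_derivative flat_exp_deriv (Suc n) x) (at x)"
proof -
  have "((\<lambda>y. poly (flat_exp_poly n) (1 / y) * exp (- (1 / y))) has_real_derivative
      poly (pderiv (flat_exp_poly n)) (1 / x) * (- (1 / x\<^sup>2)) * exp (- (1 / x)) +
      poly (flat_exp_poly n) (1 / x) * (exp (- (1 / x)) * (1 / x\<^sup>2))) (at x)"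
    using x
    by (auto intro!: derivative_eq_intros DERIV_chain2[OF poly_DERIV] simp: power2_eq_square field_simps)
  moreover have "poly (pderiv (flat_exp_poly n)) (1 / x) * (- (1 / x\<^sup>2)) * exp (- (1 / x)) +
      poly (flat_exp_poly n) (1 / x) * (exp (- (1 / x)) * (1 / x\<^sup>2)) = flat_exp_deriv (Suc n) x"
    using x by (simp add: flat_exp_deriv_def algebra_simps power2_eq_square)
  ultimately have "((\<lambda>y. poly (flat_exp_poly n) (1 / y) * exp (- (1 / y))) has_real_derivative
      flat_exp_deriv (Suc n) x) (at x)"
    by simp
  then show ?thesis
    by (rule has_field_derivative_transform_within_open[where S="{0<..}"])
       (use x in \<open>auto simp: flat_exp_deriv_def\<close>)
qed

lemma flat_exp_deriv_has_derivative_0: "(flat_exp_deriv n has_real_derivative 0) (at 0)"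
proof -
  have "((\<lambda>y. (flat_exp_deriv n y - flat_exp_deriv n 0) / (y - 0)) \<longlongrightarrow> 0) (at_left 0)"
  proof (rule tendsto_eventually)
    show "\<forall>\<^sub>F y in at_left 0. (flat_exp_deriv n y - flat_exp_deriv n 0) / (y - 0) = 0"
      unfolding eventually_at_left_field by (rule exI[of _ "-1"]) (auto simp: flat_exp_deriv_def)
  qed
  moreover have "((\<lambda>y. (flat_exp_deriv n y - flat_exp_deriv n 0) / (y - 0)) \<longlongrightarrow> 0) (at_right 0)"
  proof (rule Lim_transform_eventually[OF poly_inverse_times_exp_tendsto_0])
    show "\<forall>\<^sub>F y in at_right 0. poly ([:0, 1:] * flat_exp_poly n) (1 / y) * exp (- (1 / y)) =
        (flat_exp_deriv n y - flat_exp_deriv n 0) / (y - 0)"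
      unfolding eventually_at_right_field by (rule exI[of _ 1]) (auto simp: flat_exp_deriv_def)
  qed
  ultimately have "((\<lambda>y. (flat_exp_deriv n y - flat_exp_deriv n 0) / (y - 0)) \<longlongrightarrow> 0) (at 0)"
    by (rule filterlim_split_at)
  then show ?thesis
    by (simp add: has_field_derivative_iff)
qed

lemma deriv_tower_flat_exp_deriv: "deriv_tower flat_exp_deriv"
  unfolding deriv_tower_def
proof (intro allI)
  fix n and x :: real
  consider "x > 0" | "x < 0" | "x = 0"
    by linarith
  then show "(flat_exp_deriv n has_real_derivative flat_exp_deriv (Suc n) x) (at x)"
  proof cases
    case 2
    have "(flat_exp_deriv n has_real_derivative 0) (at x)"
      by (rule has_field_derivative_transform_within_open[where S="{..<0}", OF DERIV_const])
         (use 2 in \<open>auto simp: flat_exp_deriv_def\<close>)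
    then show ?thesis
      using 2 by (simp add: flat_exp_deriv_def)
  qed (use flat_exp_deriv_has_derivative_pos flat_exp_deriv_has_derivative_0 in
      \<open>auto simp: flat_exp_deriv_def\<close>)
qed

text \<open>A bump supported in \<open>[l/3, 2l/3]\<close>, the product of \<open>exp (-1/(x - l/3))\<close> and
  \<open>exp (-1/(2l/3 - x))\<close>; \<open>bump_deriv l n\<close> is its \<open>n\<close>-th derivative by the Leibniz rule.\<close>

definition bump_deriv :: "real \<Rightarrow> nat \<Rightarrow> real \<Rightarrow> real" where
  "bump_deriv l n x = (\<Sum>i = 0..n. real (n choose i) * flat_exp_deriv i (x - l / 3) *
      ((-1) ^ (n - i) * flat_exp_deriv (n - i) (2 * l / 3 - x)))"

lemma deriv_tower_bump_deriv: "deriv_tower (bump_deriv l)"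
proof -
  have "deriv_tower (\<lambda>n x. 1 ^ n * flat_exp_deriv n (1 * x + - (l / 3)))"
    and "deriv_tower (\<lambda>n x. (-1) ^ n * flat_exp_deriv n ((-1) * x + 2 * l / 3))"
    by (rule deriv_tower_affine[OF deriv_tower_flat_exp_deriv])+
  from deriv_tower_mult[OF this] show ?thesis
    by (simp add: bump_deriv_def[abs_def])
qed

lemma bump_deriv_eq_0: "x \<le> l / 3 \<or> 2 * l / 3 \<le> x \<Longrightarrow> bump_deriv l n x = 0"
  by (auto simp: bump_deriv_def flat_exp_deriv_def intro!: sum.neutral)

lemma bump_deriv_0: "bump_deriv l 0 x = flat_exp_deriv 0 (x - l / 3) * flat_exp_deriv 0 (2 * l / 3 - x)"
  by (simp add: bump_deriv_def)

lemma bump_deriv_0_nonneg: "0 \<le> bump_deriv l 0 x"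
  by (simp add: bump_deriv_0 flat_exp_deriv_def)

lemma continuous_on_bump_deriv_0: "continuous_on S (bump_deriv l 0)"
  using deriv_tower_bump_deriv[of l] unfolding deriv_tower_def
  by (intro DERIV_continuous_on[of S _ "\<lambda>x. bump_deriv l 1 x"]) (auto intro:
    has_field_derivative_at_within)

lemma integral_bump_deriv_0_pos:
  assumes "0 < l"
  shows "0 < integral {0..l} (bump_deriv l 0)"
proof -
  have "0 \<le> integral {0..l} (bump_deriv l 0)"
    by (intro integral_nonneg integrable_continuous_interval continuous_on_bump_deriv_0
      bump_deriv_0_nonneg)
  moreover have "integral (cbox 0 l) (bump_deriv l 0) = 0 \<longleftrightarrow> (\<forall>x \<in> cbox 0 l. bump_deriv l 0 x = 0)"
    by (rule integral_cbox_eq_0_iff)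
       (use assms in \<open>auto simp: continuous_on_bump_deriv_0 bump_deriv_0_nonneg\<close>)
  moreover have "bump_deriv l 0 (l / 2) \<noteq> 0"
    using assms by (simp add: bump_deriv_0 flat_exp_deriv_def)
  ultimately show ?thesis
    using assms by (force simp: cbox_interval)
qed

definition bump :: "real \<Rightarrow> real \<Rightarrow> real" where
  "bump l x = bump_deriv l 0 x / integral {0..l} (bump_deriv l 0)"

lemma deriv_seq_bump: "deriv_seq l (bump l) (\<lambda>n x. bump_deriv l n x / integral {0..l} (bump_deriv l 0))"
proof -
  have "deriv_seq l (bump_deriv l 0) (bump_deriv l)"
    by (rule deriv_seq_deriv_tower[OF deriv_tower_bump_deriv])
  from deriv_seq_lin[OF this this, where a="1 / integral {0..l} (bump_deriv l 0)" and b=0]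
  show ?thesis
    by (simp add: bump_def[abs_def])
qed

lemma smooth_cl_bump: "smooth_cl l (bump l)"
  using deriv_seq_bump smooth_cl_def by blast

lemma nderiv_bump_at_0: "0 < l \<Longrightarrow> nderiv l (bump l) n 0 = 0"
  using nderiv_eqI[OF _ deriv_seq_bump, of l 0 n] by (simp add: bump_deriv_eq_0)

lemma bump_eq_0: "x < l / 3 \<Longrightarrow> bump l x = 0"
  by (simp add: bump_def bump_deriv_eq_0)

lemma bump_reflect: "bump l (l - x) = bump l x"
  by (simp add: bump_def bump_deriv_0 algebra_simps)

lemma integral_bump: "0 < l \<Longrightarrow> integral {0..l} (bump l) = 1"
  using integral_bump_deriv_0_pos[of l] by (simp add: bump_def[abs_def])

lemma smooth_pair_lin:
  assumes l: "0 < l1" "0 < l2"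
    and s: "smooth_cl l1 f1" "smooth_cl l1 g1" "smooth_cl l2 f2" "smooth_cl l2 g2"
    and p: "smooth_pair w1 l1 f1 w2 l2 f2" "smooth_pair w1 l1 g1 w2 l2 g2"
  shows "smooth_pair w1 l1 (\<lambda>x. a * f1 x + b * g1 x) w2 l2 (\<lambda>x. a * f2 x + b * g2 x)"
  using p l unfolding smooth_pair_def
  by (simp add: nderiv_lin[OF l(1) s(1,2)] nderiv_lin[OF l(2) s(3,4)] algebra_simps)

lemma smooth_pair_cmult:
  assumes "0 < l1" "0 < l2" "smooth_cl l1 f1" "smooth_cl l2 f2" "smooth_pair w1 l1 f1 w2 l2 f2"
  shows "smooth_pair w1 l1 (\<lambda>x. c * f1 x) w2 l2 (\<lambda>x. c * f2 x)"
  using smooth_pair_lin[OF assms(1,2) assms(3,3,4,4) assms(5,5), of c 0] by simp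

lemma
  assumes l: "0 < l" and f: "smooth_cl l f"
    and P: "\<And>t. t \<in> {0..l} \<Longrightarrow> P t = c * (p + integral {0..t} f)"
  shows smooth_cl_scaled_primitive: "smooth_cl l P"
    and nderiv_scaled_primitive_at_0: "nderiv l P n 0 = c * (if n = 0 then p else nderiv l f (n - 1) 0)"
proof -
  have prim: "smooth_cl l (\<lambda>t. p + integral {0..t} f)"
    by (rule smooth_cl_primitive[OF l f])
  show "smooth_cl l P"
    using smooth_cl_cmult[OF l prim, of c] smooth_cl_cong[OF P] by simp
  have "nderiv l P n 0 = nderiv l (\<lambda>t. c * (p + integral {0..t} f)) n 0"
    by (simp only: nderiv_cong[OF P])
  also have "\<dots> = c * nderiv l (\<lambda>t. p + integral {0..t} f) n 0"
    using l by (intro nderiv_cmult prim) auto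
  also have "\<dots> = c * (if n = 0 then p else nderiv l f (n - 1) 0)"
    using nderiv_primitive[OF l f, of 0 p n] l by simp
  finally show "nderiv l P n 0 = c * (if n = 0 then p else nderiv l f (n - 1) 0)" .
qed

lemma smooth_pair_primitive:
  assumes l: "0 < l1" "0 < l2" and s: "smooth_cl l1 f1" "smooth_cl l2 f2"
    and init: "c * p = d * q"
    and p: "smooth_pair w1 l1 (\<lambda>t. real w1 * c * f1 t) w2 l2 (\<lambda>t. - real w2 * d * f2 t)"
    and P1: "\<And>t. t \<in> {0..l1} \<Longrightarrow> P1 t = c * (p + integral {0..t} f1)"
    and P2: "\<And>t. t \<in> {0..l2} \<Longrightarrow> P2 t = d * (q + integral {0..t} f2)"
  shows "smooth_pair w1 l1 P1 w2 l2 P2"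
  unfolding smooth_pair_def
proof
  fix n
  note N = nderiv_scaled_primitive_at_0[OF l(1) s(1) P1, of n]
    nderiv_scaled_primitive_at_0[OF l(2) s(2) P2, of n]
  show "real w1 ^ n * nderiv l1 P1 n 0 = (-1) ^ n * real w2 ^ n * nderiv l2 P2 n 0"
  proof (cases n)
    case 0
    then show ?thesis
      using N init by simp
  next
    case (Suc m)
    have "real w1 ^ m * nderiv l1 (\<lambda>t. real w1 * c * f1 t) m 0 =
        (-1) ^ m * real w2 ^ m * nderiv l2 (\<lambda>t. - real w2 * d * f2 t) m 0"
      using p unfolding smooth_pair_def by blast
    then show ?thesis
      using N Suc nderiv_cmult[OF l(1) s(1), of 0 "real w1 * c" m]
        nderiv_cmult[OF l(2) s(2), of 0 "- real w2 * d" m] l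
      by (simp add: less_imp_le mult_ac)
  qed
qed

section \<open>Orthogonality for functions on a finite set\<close>

definition inner_on :: "'s set \<Rightarrow> ('s \<Rightarrow> real) \<Rightarrow> ('s \<Rightarrow> real) \<Rightarrow> real" where
  "inner_on S a b = (\<Sum>s\<in>S. a s * b s)"

lemma inner_on_commute: "inner_on S a b = inner_on S b a"
  by (simp add: inner_on_def mult.commute)

lemma inner_on_diff_left: "inner_on S (\<lambda>s. a s - b s) c = inner_on S a c - inner_on S b c"
  by (simp add: inner_on_def left_diff_distrib sum_subtractf)

lemma inner_on_sum_left:
  "inner_on S (\<lambda>s. \<Sum>i\<in>I. c i * u i s) b = (\<Sum>i\<in>I. c i * inner_on S (u i) b)"
  by (simp add: inner_on_def sum_distrib_right sum_distrib_left mult.assoc sum.swap[of _ S])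

lemma inner_on_add_right: "inner_on S a (\<lambda>s. b s + c s) = inner_on S a b + inner_on S a c"
  by (simp add: inner_on_def distrib_left sum.distrib)

lemma inner_on_sum_right:
  "inner_on S b (\<lambda>s. \<Sum>i\<in>I. c i * u i s) = (\<Sum>i\<in>I. c i * inner_on S b (u i))"
  using inner_on_sum_left[of S c u I b] by (simp add: inner_on_commute)

lemma inner_on_cong:
  "(\<And>s. s \<in> S \<Longrightarrow> a s = a' s) \<Longrightarrow> (\<And>s. s \<in> S \<Longrightarrow> b s = b' s) \<Longrightarrow> inner_on S a b = inner_on S a' b'"
  by (simp add: inner_on_def)

lemma inner_on_self_eq_0: "finite S \<Longrightarrow> inner_on S a a = 0 \<Longrightarrow> s \<in> S \<Longrightarrow> a s = 0"
  unfolding inner_on_def using sum_nonneg_eq_0_iff[of S "\<lambda>s. a s * a s"] by auto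

lemma inner_on_span_orthogonal_eq_0:
  assumes S: "finite S" and orth: "\<forall>j\<in>I. inner_on S y (u j) = 0"
    and span: "\<forall>s\<in>S. y s = (\<Sum>i\<in>I. c i * u i s)" and s: "s \<in> S"
  shows "y s = 0"
proof -
  have "inner_on S y y = inner_on S (\<lambda>s. \<Sum>i\<in>I. c i * u i s) y"
    using span by (intro inner_on_cong) simp_all
  also have "\<dots> = 0"
    using orth by (simp add: inner_on_sum_left inner_on_commute[of S _ y])
  finally show ?thesis
    using inner_on_self_eq_0[OF S _ s] by blast
qed

lemma inner_on_diff_cmult_left:
  "inner_on S (\<lambda>s. a s - t * b s) c = inner_on S a c - t * inner_on S b c"
  by (simp add: inner_on_def algebra_simps sum_subtractf sum_distrib_left)

text \<open>When \<open>v\<close> vanishes on \<open>S\<close>, the coefficient is \<open>0\<close> by division by zero.\<close>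

lemma inner_on_projection_residual:
  assumes "finite S"
  shows "inner_on S (\<lambda>s. x s - inner_on S x v / inner_on S v v * v s) v = 0"
proof (cases "inner_on S v v = 0")
  case True
  then have "\<forall>s\<in>S. v s = 0"
    using inner_on_self_eq_0[OF assms] by blast
  then show ?thesis
    by (simp add: inner_on_def)
qed (unfold inner_on_diff_cmult_left, simp)

lemma exists_orthogonal_residual:
  fixes u :: "'i \<Rightarrow> 's \<Rightarrow> real"
  assumes S: "finite S" and I: "finite I"
  shows "\<exists>c. \<forall>j\<in>I. inner_on S (\<lambda>s. x s - (\<Sum>i\<in>I. c i * u i s)) (u j) = 0"
  using I
proof (induction I arbitrary: x rule: finite_induct)
  case empty
  then show ?case by simp
next
  case (insert k I)
  obtain c where c: "\<forall>j\<in>I. inner_on S (\<lambda>s. x s - (\<Sum>i\<in>I. c i * u i s)) (u j) = 0"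
    using insert.IH by blast
  obtain d where d: "\<forall>j\<in>I. inner_on S (\<lambda>s. u k s - (\<Sum>i\<in>I. d i * u i s)) (u j) = 0"
    using insert.IH by blast
  define x' where "x' s = x s - (\<Sum>i\<in>I. c i * u i s)" for s
  define v where "v s = u k s - (\<Sum>i\<in>I. d i * u i s)" for s
  define t where "t = inner_on S x' v / inner_on S v v"
  define z where "z s = x' s - t * v s" for s
  have z_I: "inner_on S z (u j) = 0" if "j \<in> I" for j
    using c d that by (simp add: z_def[abs_def] inner_on_diff_cmult_left x'_def[abs_def] v_def[abs_def])
  have "inner_on S z (u k) = inner_on S z (\<lambda>s. v s + (\<Sum>i\<in>I. d i * u i s))"
    by (rule inner_on_cong) (simp_all add: v_def)
  also have "\<dots> = inner_on S z v + (\<Sum>i\<in>I. d i * inner_on S z (u i))"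
    by (simp only: inner_on_add_right inner_on_sum_right)
  also have "\<dots> = 0"
    using inner_on_projection_residual[OF S, of x' v] z_I by (simp add: z_def[abs_def] t_def)
  finally have z_k: "inner_on S z (u k) = 0" .
  define c' where "c' = (\<lambda>i. c i - t * d i)(k := t)"
  have "x s - (\<Sum>i\<in>insert k I. c' i * u i s) = z s" for s
  proof -
    have "(\<Sum>i\<in>insert k I. c' i * u i s) = t * u k s + (\<Sum>i\<in>I. (c i - t * d i) * u i s)"
      using insert.hyps by (simp add: c'_def) (rule sum.cong, auto)
    then show ?thesis
      by (simp add: z_def x'_def v_def algebra_simps sum_subtractf sum_distrib_left)
  qed
  then show ?case
    using z_I z_k by (intro exI[of _ c']) (simp add: z_def[symmetric])
qed

lemma in_span_if_orthogonal_to_orthogonal: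
  assumes S: "finite S" and I: "finite I"
    and residual: "\<And>c. P (\<lambda>s. t s - (\<Sum>i\<in>I. c i * u i s))"
    and orth: "\<And>z. P z \<Longrightarrow> \<forall>j\<in>I. inner_on S z (u j) = 0 \<Longrightarrow> inner_on S t z = 0"
  shows "\<exists>c. \<forall>s\<in>S. t s = (\<Sum>i\<in>I. c i * u i s)"
proof -
  obtain c where c: "\<forall>j\<in>I. inner_on S (\<lambda>s. t s - (\<Sum>i\<in>I. c i * u i s)) (u j) = 0"
    using exists_orthogonal_residual[OF S I] by blast
  define z where "z = (\<lambda>s. t s - (\<Sum>i\<in>I. c i * u i s))"
  have "inner_on S z z = inner_on S t z - (\<Sum>i\<in>I. c i * inner_on S (u i) z)"
    unfolding z_def[of] inner_on_diff_left inner_on_sum_left ..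
  also have "\<dots> = 0"
    using c orth[OF residual] by (simp add: z_def inner_on_commute[of S _ "\<lambda>s. t s - _ s"])
  finally have "\<forall>s\<in>S. z s = 0"
    using inner_on_self_eq_0[OF S] by blast
  then show ?thesis
    by (auto simp: z_def)
qed

lemma orthogonal_residuals_reproduce:
  assumes S: "finite S"
    and C: "\<And>v. v \<in> F \<Longrightarrow> \<forall>j\<in>I. inner_on S (\<lambda>s. f v s - (\<Sum>i\<in>I. C v i * u i s)) (u j) = 0"
    and a_orth: "\<forall>j\<in>I. inner_on S a (u j) = 0"
    and a_frame: "\<forall>s\<in>S. a s = (\<Sum>v\<in>F. \<alpha> v * f v s)" and s: "s \<in> S"
  shows "a s = (\<Sum>v\<in>F. \<alpha> v * (f v s - (\<Sum>i\<in>I. C v i * u i s)))"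
proof -
  define y where "y = (\<lambda>s. a s - (\<Sum>v\<in>F. \<alpha> v * (f v s - (\<Sum>i\<in>I. C v i * u i s))))"
  have span: "\<forall>s\<in>S. y s = (\<Sum>i\<in>I. (\<Sum>v\<in>F. \<alpha> v * C v i) * u i s)"
    using a_frame
    by (simp add: y_def right_diff_distrib sum_subtractf sum_distrib_left sum_distrib_right
        sum.swap[of _ F] mult.assoc)
  have "\<forall>j\<in>I. inner_on S y (u j) = 0"
    using a_orth C unfolding y_def inner_on_diff_left inner_on_sum_left by simp
  from inner_on_span_orthogonal_eq_0[OF S this span s] have "y s = 0" .
  then show ?thesis
    by (simp add: y_def)
qed

definition form_subspace :: "'e form set \<Rightarrow> bool" where
  "form_subspace Y \<longleftrightarrow> (\<lambda>e t. 0) \<in> Y \<and> (\<forall>x\<in>Y. \<forall>y\<in>Y. \<forall>a b. (\<lambda>e t. a * x e t + b * y e t) \<in> Y)"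

lemma form_subspaceD: "form_subspace Y \<Longrightarrow> x \<in> Y \<Longrightarrow> y \<in> Y \<Longrightarrow> (\<lambda>e t. a * x e t + b * y e t) \<in> Y"
  unfolding form_subspace_def by blast

lemma lin_fun_on_lin:
  assumes Y: "form_subspace Y" and \<phi>: "lin_fun_on Y \<phi>" and x: "x \<in> Y" and y: "y \<in> Y"
  shows "\<phi> (\<lambda>e t. a * x e t + b * y e t) = a * \<phi> x + b * \<phi> y"
proof -
  have "(\<lambda>e t. a * x e t) \<in> Y" "(\<lambda>e t. b * y e t) \<in> Y"
    using form_subspaceD[OF Y x x, of a 0] form_subspaceD[OF Y y y, of b 0] by simp_all
  then show ?thesis
    using \<phi> x y unfolding lin_fun_on_def by simp
qed

lemma lin_fun_on_eq_if_diff_eq_0: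
  assumes "form_subspace Y" "lin_fun_on Y \<phi>" "x \<in> Y" "y \<in> Y" "\<phi> (\<lambda>e t. x e t - y e t) = 0"
  shows "\<phi> x = \<phi> y"
  using lin_fun_on_lin[OF assms(1-4), of 1 "-1"] assms(5) by simp

lemma lin_fun_on_sum:
  assumes Y: "form_subspace Y" and \<phi>: "lin_fun_on Y \<phi>" and I: "finite I" and F: "\<And>i. i \<in> I \<Longrightarrow> F i \<in> Y"
  shows "(\<lambda>e t. \<Sum>i\<in>I. c i * F i e t) \<in> Y \<and> \<phi> (\<lambda>e t. \<Sum>i\<in>I. c i * F i e t) = (\<Sum>i\<in>I. c i * \<phi> (F i))"
  using I F
proof (induction I rule: finite_induct)
  case empty
  have "(\<lambda>e t. 0) \<in> Y"
    using Y by (simp add: form_subspace_def)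
  moreover from this have "\<phi> (\<lambda>e t. 0) = 0"
    using \<phi>[unfolded lin_fun_on_def, THEN conjunct2, rule_format, where c=0 and x="\<lambda>e t. 0"] by simp
  ultimately show ?case
    by simp
next
  case (insert k I)
  let ?S = "\<lambda>e t. \<Sum>i\<in>I. c i * F i e t"
  have S: "?S \<in> Y" "\<phi> ?S = (\<Sum>i\<in>I. c i * \<phi> (F i))" and Fk: "F k \<in> Y"
    using insert by auto
  have "(\<lambda>e t. \<Sum>i\<in>insert k I. c i * F i e t) = (\<lambda>e t. c k * F k e t + 1 * ?S e t)"
    using insert.hyps by (simp add: fun_eq_iff)
  then show ?case
    using form_subspaceD[OF Y Fk S(1), of "c k" 1] lin_fun_on_lin[OF Y \<phi> Fk S(1), of "c k" 1]
      S(2) insert.hyps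
    by simp
qed

lemma perfect_pairingI:
  assumes "\<And>k n. k \<in> K \<Longrightarrow> n \<in> N \<Longrightarrow> B k n = 0"
    and "\<And>\<phi>. lin_fun_on Y \<phi> \<Longrightarrow> \<forall>n\<in>N. \<phi> n = 0 \<Longrightarrow> \<exists>!k. k \<in> K \<and> (\<forall>y\<in>Y. B k y = \<phi> y)"
    and "\<And>\<psi>. lin_fun_on K \<psi> \<Longrightarrow> \<exists>y\<in>Y. \<forall>k\<in>K. B k y = \<psi> k"
    and "\<And>y y'. y \<in> Y \<Longrightarrow> y' \<in> Y \<Longrightarrow> \<forall>k\<in>K. B k y = B k y' \<Longrightarrow> (\<lambda>e t. y e t - y' e t) \<in> N"
  shows "perfect_pairing K Y N B"
  using assms unfolding perfect_pairing_def by blast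

section \<open>Functions on vertices and edges of a weighted graph\<close>

locale weighted_graph =
  fixes G :: "('v, 'e) wmgraph"
  assumes wmg: "wmg G"
begin

abbreviation weight :: "'e \<Rightarrow> real" where
  "weight e \<equiv> real (wt G e)"

lemma finite_verts: "finite (verts G)" and finite_edges: "finite (edges G)"
  using wmg by (auto simp: wmg_def)

lemma finite_out_edges: "finite (out_edges G v)"
  using finite_edges by (simp add: out_edges_def)

context
  fixes e assumes e: "e \<in> edges G"
begin

lemma rev_in_edges [simp]: "rev G e \<in> edges G"
  and rev_rev [simp]: "rev G (rev G e) = e"
  and rev_neq: "rev G e \<noteq> e"
  and tail_in_verts [simp]: "tail G e \<in> verts G"
  and len_pos [simp]: "0 < len G e"
  and len_nonneg [simp]: "0 \<le> len G e"
  and len_rev [simp]: "len G (rev G e) = len G e"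
  and weight_pos [simp]: "0 < weight e"
  and wt_neq_0 [simp]: "wt G e \<noteq> 0"
  and weight_rev [simp]: "weight (rev G e) = weight e"
  and tail_rev [simp]: "tail G (rev G e) = head G e"
  and head_rev [simp]: "head G (rev G e) = tail G e"
  and zero_in_edge_interval [simp]: "0 \<in> {0..len G e}"
  using wmg e by (auto simp: wmg_def head_def less_imp_le)

end

lemma in_out_edges_iff: "e \<in> out_edges G v \<longleftrightarrow> e \<in> edges G \<and> tail G e = v"
  by (simp add: out_edges_def)

definition some_out_edge :: "'v \<Rightarrow> 'e" where
  "some_out_edge v = (SOME e. e \<in> out_edges G v)"

lemma some_out_edge:
  assumes "out_edges G v \<noteq> {}"
  shows "some_out_edge v \<in> edges G" "tail G (some_out_edge v) = v"
proof -
  obtain e where "e \<in> out_edges G v"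
    using assms by blast
  then have "some_out_edge v \<in> out_edges G v"
    unfolding some_out_edge_def by (rule someI)
  then show "some_out_edge v \<in> edges G" "tail G (some_out_edge v) = v"
    by (simp_all add: in_out_edges_iff)
qed

lemma out_edges_tail_nonempty: "e \<in> edges G \<Longrightarrow> out_edges G (tail G e) \<noteq> {}"
  by (auto simp: in_out_edges_iff)

lemma rev_eq_iff: "x \<in> edges G \<Longrightarrow> y \<in> edges G \<Longrightarrow> rev G x = y \<longleftrightarrow> x = rev G y"
  by auto

lemma sum_edges_rev: "(\<Sum>e\<in>edges G. f (rev G e)) = (\<Sum>e\<in>edges G. f e)"
proof -
  have "bij_betw (rev G) (edges G) (edges G)"
    by (rule bij_betw_byWitness[of _ "rev G"]) auto
  then show ?thesis
    by (rule sum.reindex_bij_betw)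
qed

lemma sum_edges_by_tail:
  "(\<Sum>e\<in>edges G. f e * a (tail G e)) = (\<Sum>v\<in>verts G. a v * (\<Sum>e\<in>out_edges G v. f e :: real))"
proof -
  have "(\<Sum>e\<in>edges G. f e * a (tail G e)) = (\<Sum>v\<in>verts G. \<Sum>e\<in>{x \<in> edges G. tail G x = v}. f e * a
    (tail G e))"
    by (rule sum.group[symmetric]) (auto simp: finite_edges finite_verts)
  also have "\<dots> = (\<Sum>v\<in>verts G. a v * (\<Sum>e\<in>out_edges G v. f e))"
  proof (rule sum.cong)
    fix v
    have "(\<Sum>e\<in>{x \<in> edges G. tail G x = v}. f e * a (tail G e)) = (\<Sum>e\<in>out_edges G v. f e * a v)"
      by (simp add: out_edges_def)
    also have "\<dots> = a v * (\<Sum>e\<in>out_edges G v. f e)"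
      by (subst sum_distrib_left) (simp add: mult.commute)
    finally show "(\<Sum>e\<in>{x \<in> edges G. tail G x = v}. f e * a (tail G e)) = a v * (\<Sum>e\<in>out_edges G v. f e)" .
  qed simp
  finally show ?thesis .
qed

lemma sum_delta_edges: "x \<in> edges G \<Longrightarrow> (\<Sum>e\<in>edges G. f e * (if x = e then 1 else 0)) = (f x :: real)"
  using finite_edges by (simp add: if_distrib[of "\<lambda>t. _ * t"] cong: if_cong)

lemma sum_indicator_verts: "u \<in> verts G \<Longrightarrow> (\<Sum>v\<in>verts G. a v * indicator {v} u) = (a u :: real)"
  using finite_verts
  by (simp add: indicator_def if_distrib[of "\<lambda>t. _ * t"] eq_commute[of u] cong: if_cong)

definition divergence :: "('e \<Rightarrow> real) \<Rightarrow> 'v \<Rightarrow> real" where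
  "divergence h v = (\<Sum>e\<in>out_edges G v. h e)"

definition gradient :: "('v \<Rightarrow> real) \<Rightarrow> 'e \<Rightarrow> real" where
  "gradient a e = a (head G e) - a (tail G e)"

definition locally_constant :: "('v \<Rightarrow> real) \<Rightarrow> bool" where
  "locally_constant a \<longleftrightarrow> (\<forall>e\<in>edges G. a (tail G e) = a (head G e))"

definition antisymmetric :: "('e \<Rightarrow> real) \<Rightarrow> bool" where
  "antisymmetric h \<longleftrightarrow> (\<forall>e\<in>edges G. h (rev G e) = - h e)"

definition circulation :: "('e \<Rightarrow> real) \<Rightarrow> bool" where
  "circulation h \<longleftrightarrow> antisymmetric h \<and> (\<forall>v\<in>verts G. divergence h v = 0)"

definition signed_indicator :: "'e \<Rightarrow> 'e \<Rightarrow> real" where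
  "signed_indicator e x = (if x = e then 1 else 0) - (if x = rev G e then 1 else 0)"

lemma divergence_sum: "divergence (\<lambda>x. \<Sum>i\<in>I. c i * f i x) v = (\<Sum>i\<in>I. c i * divergence (f i) v)"
  by (simp add: divergence_def sum_distrib_left sum.swap[of _ "out_edges G v"])

lemma gradient_sum: "gradient (\<lambda>u. \<Sum>i\<in>I. c i * f i u) e = (\<Sum>i\<in>I. c i * gradient (f i) e)"
  by (simp add: gradient_def right_diff_distrib sum_subtractf)

lemma antisymmetric_sum:
  "(\<And>i. i \<in> I \<Longrightarrow> antisymmetric (f i)) \<Longrightarrow> antisymmetric (\<lambda>x. \<Sum>i\<in>I. c i * f i x)"
  by (simp add: antisymmetric_def sum_negf)

lemma antisymmetric_diff:
  "antisymmetric f \<Longrightarrow> antisymmetric g \<Longrightarrow> antisymmetric (\<lambda>x. f x - g x)"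
  by (simp add: antisymmetric_def)

lemma antisymmetric_gradient: "antisymmetric (gradient a)"
  by (simp add: antisymmetric_def gradient_def)

lemma antisymmetric_signed_indicator: "e \<in> edges G \<Longrightarrow> antisymmetric (signed_indicator e)"
  unfolding antisymmetric_def signed_indicator_def using rev_eq_iff rev_neq by fastforce

lemma sum_signed_indicator:
  assumes "x \<in> edges G"
  shows "(\<Sum>e\<in>edges G. f e * signed_indicator e x) = f x - f (rev G x)"
proof -
  have "(\<Sum>e\<in>edges G. f e * (if x = rev G e then 1 else 0)) =
      (\<Sum>e\<in>edges G. f e * (if rev G x = e then 1 else 0))"
    by (rule sum.cong) (use assms rev_eq_iff in auto)
  then show ?thesis
    using assms sum_delta_edges[of x f] sum_delta_edges[of "rev G x" f]
    by (simp add: signed_indicator_def right_diff_distrib sum_subtractf eq_commute[of x])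
qed

lemma sum_signed_indicator_antisymmetric:
  "antisymmetric h \<Longrightarrow> x \<in> edges G \<Longrightarrow> (\<Sum>e\<in>edges G. h e / 2 * signed_indicator e x) = h x"
  using sum_signed_indicator[of x "\<lambda>e. h e / 2"] by (simp add: antisymmetric_def)

lemma inner_divergence_signed_indicator:
  assumes "e \<in> edges G"
  shows "inner_on (verts G) a (divergence (signed_indicator e)) = a (tail G e) - a (head G e)"
proof -
  have "inner_on (verts G) a (divergence (signed_indicator e)) =
      (\<Sum>x\<in>edges G. signed_indicator e x * a (tail G x))"
    by (simp add: inner_on_def divergence_def sum_edges_by_tail)
  also have "\<dots> = (\<Sum>x\<in>edges G. a (tail G x) * (if e = x then 1 else 0)) -
      (\<Sum>x\<in>edges G. a (tail G x) * (if rev G e = x then 1 else 0))"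
    by (simp add: signed_indicator_def algebra_simps sum_subtractf eq_commute)
  also have "\<dots> = a (tail G e) - a (head G e)"
    using assms sum_delta_edges[of e "\<lambda>x. a (tail G x)"] sum_delta_edges[of "rev G e" "\<lambda>x. a (tail G x)"]
    by simp
  finally show ?thesis .
qed

lemma locally_constant_iff_orthogonal:
  "locally_constant a \<longleftrightarrow> (\<forall>e\<in>edges G. inner_on (verts G) a (divergence (signed_indicator e)) = 0)"
  by (simp add: locally_constant_def inner_divergence_signed_indicator)

lemma inner_on_gradient:
  assumes "antisymmetric z"
  shows "inner_on (edges G) z (gradient a) = -2 * (\<Sum>v\<in>verts G. a v * divergence z v)"
proof -
  have "(\<Sum>e\<in>edges G. z e * a (head G e)) = (\<Sum>e\<in>edges G. z (rev G e) * a (tail G e))"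
    using sum_edges_rev[of "\<lambda>e. z (rev G e) * a (tail G e)"] by simp
  also have "\<dots> = - (\<Sum>e\<in>edges G. z e * a (tail G e))"
    using assms by (simp add: antisymmetric_def sum_negf[symmetric])
  finally show ?thesis
    by (simp add: inner_on_def gradient_def right_diff_distrib sum_subtractf sum_edges_by_tail
      divergence_def)
qed

lemma inner_gradient_indicator:
  assumes "antisymmetric z" and v: "v \<in> verts G"
  shows "inner_on (edges G) z (gradient (indicator {v})) = -2 * divergence z v"
proof -
  have "(\<Sum>u\<in>verts G. indicator {v} u * divergence z u) = (\<Sum>u\<in>verts G. if u = v then divergence z u
    else 0)"
    by (rule sum.cong) (auto simp: indicator_def)
  then show ?thesis
    using inner_on_gradient[OF assms(1)] finite_verts v by simp
qed

lemma circulation_iff_orthogonal: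
  "circulation h \<longleftrightarrow>
     antisymmetric h \<and> (\<forall>v\<in>verts G. inner_on (edges G) h (gradient (indicator {v})) = 0)"
  by (auto simp: circulation_def inner_gradient_indicator)

lemma orthogonal_locally_constant_imp_divergence:
  assumes "\<And>a. locally_constant a \<Longrightarrow> inner_on (verts G) t a = 0"
  shows "\<exists>h. antisymmetric h \<and> (\<forall>v\<in>verts G. divergence h v = t v)"
proof -
  have "\<exists>c. \<forall>v\<in>verts G. t v = (\<Sum>i\<in>edges G. c i * divergence (signed_indicator i) v)"
  proof (rule in_span_if_orthogonal_to_orthogonal[OF finite_verts finite_edges, where P="\<lambda>_. True"])
    fix z assume "\<forall>j\<in>edges G. inner_on (verts G) z (divergence (signed_indicator j)) = 0"
    then show "inner_on (verts G) t z = 0"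
      using assms locally_constant_iff_orthogonal by blast
  qed simp
  then obtain c where c: "\<forall>v\<in>verts G. t v = (\<Sum>i\<in>edges G. c i * divergence (signed_indicator i) v)" ..
  define h where "h x = (\<Sum>i\<in>edges G. c i * signed_indicator i x)" for x
  have "antisymmetric h"
    unfolding h_def[abs_def] by (intro antisymmetric_sum antisymmetric_signed_indicator)
  moreover have "\<forall>v\<in>verts G. divergence h v = t v"
    using c by (simp add: h_def[abs_def] divergence_sum)
  ultimately show ?thesis
    by blast
qed

lemma orthogonal_circulations_imp_gradient:
  assumes J: "antisymmetric J" and orth: "\<And>h. circulation h \<Longrightarrow> inner_on (edges G) h J = 0"
  shows "\<exists>a. \<forall>e\<in>edges G. J e = gradient a e"
proof -
  have "\<exists>c. \<forall>e\<in>edges G. J e = (\<Sum>v\<in>verts G. c v * gradient (indicator {v}) e)"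
  proof (rule in_span_if_orthogonal_to_orthogonal[OF finite_edges finite_verts, where P=antisymmetric])
    show "antisymmetric (\<lambda>e. J e - (\<Sum>v\<in>verts G. c v * gradient (indicator {v}) e))" for c
      by (intro antisymmetric_diff J antisymmetric_sum antisymmetric_gradient)
  next
    fix z assume "antisymmetric z" "\<forall>v\<in>verts G. inner_on (edges G) z (gradient (indicator {v})) = 0"
    then have "circulation z"
      using circulation_iff_orthogonal by blast
    then show "inner_on (edges G) J z = 0"
      using orth inner_on_commute by metis
  qed
  then obtain c where "\<forall>e\<in>edges G. J e = (\<Sum>v\<in>verts G. c v * gradient (indicator {v}) e)" ..
  then have "\<forall>e\<in>edges G. J e = gradient (\<lambda>u. \<Sum>v\<in>verts G. c v * indicator {v} u) e"
    by (simp add: gradient_sum)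
  then show ?thesis
    by blast
qed

text \<open>Reproducing families replace bases of these spaces when linear functionals on them are
  represented.\<close>

lemma locally_constant_reproducing_family:
  "\<exists>z. (\<forall>v. locally_constant (z v)) \<and>
     (\<forall>a. locally_constant a \<longrightarrow> (\<forall>u\<in>verts G. a u = (\<Sum>v\<in>verts G. a v * z v u)))"
proof -
  let ?u = "\<lambda>e. divergence (signed_indicator e)"
  have "\<forall>v. \<exists>c. \<forall>j\<in>edges G.
      inner_on (verts G) (\<lambda>s. indicator {v} s - (\<Sum>i\<in>edges G. c i * ?u i s)) (?u j) = 0"
    using exists_orthogonal_residual[OF finite_verts finite_edges, where u="?u"] by blast
  from choice[OF this] obtain C where C: "\<forall>v. \<forall>j\<in>edges G.
      inner_on (verts G) (\<lambda>s. indicator {v} s - (\<Sum>i\<in>edges G. C v i * ?u i s)) (?u j) = 0"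
    by blast
  define z where "z v s = indicator {v} s - (\<Sum>i\<in>edges G. C v i * ?u i s)" for v s
  have "locally_constant (z v)" for v
    using C by (simp add: locally_constant_iff_orthogonal z_def[abs_def])
  moreover have "a u = (\<Sum>v\<in>verts G. a v * z v u)" if a: "locally_constant a" and u: "u \<in> verts G" for a u
    unfolding z_def
  proof (rule orthogonal_residuals_reproduce[OF finite_verts _ _ _ u])
    show "\<forall>j\<in>edges G. inner_on (verts G) a (?u j) = 0"
      using a locally_constant_iff_orthogonal by blast
    show "\<forall>s\<in>verts G. a s = (\<Sum>v\<in>verts G. a v * indicator {v} s)"
      using sum_indicator_verts by simp
  qed (use C in blast)
  ultimately show ?thesis
    by blast
qed

lemma circulation_reproducing_family:
  "\<exists>z. (\<forall>e\<in>edges G. circulation (z e)) \<and>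
     (\<forall>h. circulation h \<longrightarrow> (\<forall>x\<in>edges G. h x = (\<Sum>e\<in>edges G. h e / 2 * z e x)))"
proof -
  let ?u = "\<lambda>v. gradient (indicator {v})"
  have "\<forall>e. \<exists>c. \<forall>j\<in>verts G.
      inner_on (edges G) (\<lambda>s. signed_indicator e s - (\<Sum>i\<in>verts G. c i * ?u i s)) (?u j) = 0"
    using exists_orthogonal_residual[OF finite_edges finite_verts, where u="?u"] by blast
  from choice[OF this] obtain C where C: "\<forall>e. \<forall>j\<in>verts G.
      inner_on (edges G) (\<lambda>s. signed_indicator e s - (\<Sum>i\<in>verts G. C e i * ?u i s)) (?u j) = 0"
    by blast
  define z where "z e s = signed_indicator e s - (\<Sum>i\<in>verts G. C e i * ?u i s)" for e s
  have "circulation (z e)" if "e \<in> edges G" for e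
    unfolding circulation_iff_orthogonal
  proof
    show "antisymmetric (z e)"
      unfolding z_def[abs_def]
      by (intro antisymmetric_diff antisymmetric_signed_indicator that antisymmetric_sum
        antisymmetric_gradient)
  qed (use C in \<open>simp add: z_def[abs_def]\<close>)
  moreover have "h x = (\<Sum>e\<in>edges G. h e / 2 * z e x)" if h: "circulation h" and x: "x \<in> edges G" for h x
    unfolding z_def
  proof (rule orthogonal_residuals_reproduce[OF finite_edges _ _ _ x])
    show "\<forall>j\<in>verts G. inner_on (edges G) h (?u j) = 0"
      using h circulation_iff_orthogonal by blast
    show "\<forall>s\<in>edges G. h s = (\<Sum>e\<in>edges G. h e / 2 * signed_indicator e s)"
      using h sum_signed_indicator_antisymmetric by (simp add: circulation_def)
  qed (use C in blast)
  ultimately show ?thesis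
    by blast
qed

lemma
  assumes "A00 G F"
  shows A00_canonical: "canonical G F"
    and A00_smooth: "e \<in> edges G \<Longrightarrow> smooth_cl (len G e) (F e)"
    and A00_rev: "e \<in> edges G \<Longrightarrow> x \<in> {0..len G e} \<Longrightarrow> F (rev G e) x = F e (len G e - x)"
    and A00_tail: "e \<in> edges G \<Longrightarrow> e' \<in> edges G \<Longrightarrow> tail G e = tail G e' \<Longrightarrow> F e 0 = F e' 0"
  using assms unfolding A00_def by (elim conjE; meson)+

lemma
  assumes "A10 G F"
  shows A10_canonical: "canonical G F"
    and A10_smooth: "e \<in> edges G \<Longrightarrow> smooth_cl (len G e) (F e)"
    and A10_rev: "e \<in> edges G \<Longrightarrow> x \<in> {0..len G e} \<Longrightarrow> F (rev G e) x = - F e (len G e - x)"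
    and A10_valency_1: "e \<in> edges G \<Longrightarrow> valency G (tail G e) = 1 \<Longrightarrow>
      \<exists>\<delta>>0. \<forall>x\<in>{0..len G e}. x < \<delta> \<longrightarrow> F e x = 0"
    and A10_valency_2: "v \<in> verts G \<Longrightarrow> out_edges G v = {e1, e2} \<Longrightarrow> e1 \<noteq> e2 \<Longrightarrow>
      smooth_pair (wt G e1) (len G e1) (\<lambda>x. weight e1 * F e1 x)
        (wt G e2) (len G e2) (\<lambda>x. - weight e2 * F e2 x)"
    and A10_valency_ge_3: "v \<in> verts G \<Longrightarrow> valency G v \<ge> 3 \<Longrightarrow> (\<Sum>e\<in>out_edges G v. weight e * F e 0) = 0"
  using assms unfolding A10_def by (elim conjE; meson)+

lemma
  assumes "A11 G F"
  shows A11_canonical: "canonical G F"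
    and A11_smooth: "e \<in> edges G \<Longrightarrow> smooth_cl (len G e) (F e)"
    and A11_rev: "e \<in> edges G \<Longrightarrow> x \<in> {0..len G e} \<Longrightarrow> F (rev G e) x = F e (len G e - x)"
    and A11_valency_1: "e \<in> edges G \<Longrightarrow> valency G (tail G e) = 1 \<Longrightarrow>
      \<exists>\<delta>>0. \<forall>x\<in>{0..len G e}. x < \<delta> \<longrightarrow> F e x = 0"
    and A11_valency_2: "v \<in> verts G \<Longrightarrow> out_edges G v = {e1, e2} \<Longrightarrow> e1 \<noteq> e2 \<Longrightarrow>
      smooth_pair (wt G e1) (len G e1) (\<lambda>x. weight e1 ^ 2 * F e1 x)
        (wt G e2) (len G e2) (\<lambda>x. weight e2 ^ 2 * F e2 x)"
  using assms unfolding A11_def by (elim conjE; meson)+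

lemma canonical_eq_0: "canonical G F \<Longrightarrow> \<not> (e \<in> edges G \<and> t \<in> {0..len G e}) \<Longrightarrow> F e t = 0"
  unfolding canonical_def by blast

lemma valency_1_out_edges:
  assumes "e \<in> edges G" "valency G (tail G e) = 1"
  shows "out_edges G (tail G e) = {e}"
proof -
  obtain e' where "out_edges G (tail G e) = {e'}"
    using assms(2) card_1_singletonE unfolding valency_def by blast
  moreover have "e \<in> out_edges G (tail G e)"
    using assms(1) by (simp add: in_out_edges_iff)
  ultimately show ?thesis
    by simp
qed

lemma out_edges_cases:
  obtains "out_edges G v = {}"
  | e where "out_edges G v = {e}" "valency G v = 1"
  | e1 e2 where "out_edges G v = {e1, e2}" "e1 \<noteq> e2"
  | "3 \<le> valency G v"
proof -
  consider "card (out_edges G v) = 0" | "card (out_edges G v) = 1" | "card (out_edges G v) = 2"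
    | "3 \<le> card (out_edges G v)"
    by linarith
  then show ?thesis
  proof cases
    case 1
    then show ?thesis
      using that(1) finite_out_edges by simp
  next
    case 2
    then show ?thesis
      using that(2) by (metis card_1_singletonE valency_def)
  next
    case 3
    then show ?thesis
      using that(3) by (metis card_2_iff)
  next
    case 4
    then show ?thesis
      using that(4) by (simp add: valency_def)
  qed
qed

text \<open>The flux condition holds at every vertex, not only at those of valency at least 3.\<close>

lemma A10_flux:
  assumes A: "A10 G F" and v: "v \<in> verts G"
  shows "(\<Sum>e\<in>out_edges G v. weight e * F e 0) = 0"
proof (cases v rule: out_edges_cases)
  case (2 e)
  then have e: "e \<in> edges G" "tail G e = v"
    by (auto simp: in_out_edges_iff)
  then obtain \<delta> where "\<delta> > 0" "\<forall>x\<in>{0..len G e}. x < \<delta> \<longrightarrow> F e x = 0"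
    using A10_valency_1[OF A e(1)] 2 by auto
  then have "F e 0 = 0"
    using zero_in_edge_interval[OF e(1)] by blast
  then show ?thesis
    using 2 by simp
next
  case (3 e1 e2)
  then have e: "e1 \<in> edges G" "e2 \<in> edges G"
    by (auto simp: in_out_edges_iff)
  have at_0: "nderiv (len G e) (\<lambda>x. c * F e x) 0 0 = c * F e 0" if "e \<in> edges G" for e c
    using nderiv_cmult[OF len_pos[OF that] A10_smooth[OF A that] zero_in_edge_interval[OF that]]
      nderiv_0[OF len_pos[OF that] A10_smooth[OF A that] zero_in_edge_interval[OF that]]
    by simp
  have "weight e1 ^ 0 * nderiv (len G e1) (\<lambda>x. weight e1 * F e1 x) 0 0 =
      (-1) ^ 0 * weight e2 ^ 0 * nderiv (len G e2) (\<lambda>x. - weight e2 * F e2 x) 0 0"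
    using A10_valency_2[OF A v 3] unfolding smooth_pair_def by blast
  then have "weight e1 * F e1 0 = - weight e2 * F e2 0"
    unfolding at_0[OF e(1)] at_0[OF e(2)] by simp
  then show ?thesis
    using 3 by simp
qed (use A10_valency_ge_3[OF A v] in auto)

lemma eventually_eq_lin:
  fixes S :: "real set"
  assumes "\<exists>\<delta>>0. \<forall>x\<in>S. x < \<delta> \<longrightarrow> F x = c" "\<exists>\<delta>>0. \<forall>x\<in>S. x < \<delta> \<longrightarrow> H x = d"
  shows "\<exists>\<delta>>0. \<forall>x\<in>S. x < \<delta> \<longrightarrow> a * F x + b * H x = a * c + b * (d::real)"
proof -
  obtain d1 d2 where "d1 > 0" "\<forall>x\<in>S. x < d1 \<longrightarrow> F x = c" "d2 > 0" "\<forall>x\<in>S. x < d2 \<longrightarrow> H x = d"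
    using assms by blast
  then show ?thesis
    by (intro exI[of _ "min d1 d2"]) auto
qed

lemma A10_lin:
  assumes F: "A10 G F" and H: "A10 G H"
  shows "A10 G (\<lambda>e t. a * F e t + b * H e t)"
  unfolding A10_def
proof (intro conjI ballI allI impI)
  show "canonical G (\<lambda>e t. a * F e t + b * H e t)"
    using A10_canonical[OF F] A10_canonical[OF H] by (simp add: canonical_def)
  fix e assume e: "e \<in> edges G"
  show "smooth_cl (len G e) (\<lambda>t. a * F e t + b * H e t)"
    using e A10_smooth[OF F] A10_smooth[OF H] by (simp add: smooth_cl_lin)
  fix x assume "x \<in> {0..len G e}"
  then show "a * F (rev G e) x + b * H (rev G e) x = - (a * F e (len G e - x) + b * H e (len G e - x))"
    using e A10_rev[OF F] A10_rev[OF H] by simp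
next
  fix e assume "e \<in> edges G" "valency G (tail G e) = 1"
  then show "\<exists>\<delta>>0. \<forall>x\<in>{0..len G e}. x < \<delta> \<longrightarrow> a * F e x + b * H e x = 0"
    using A10_valency_1[OF F] A10_valency_1[OF H]
      eventually_eq_lin[where S="{0..len G e}" and F="F e" and H="H e" and c=0 and d=0 and a=a and b=b]
    by simp
next
  fix v e1 e2 assume v: "v \<in> verts G" and o: "out_edges G v = {e1, e2} \<and> e1 \<noteq> e2"
  then have e: "e1 \<in> edges G" "e2 \<in> edges G"
    by (auto simp: in_out_edges_iff)
  have "smooth_pair (wt G e1) (len G e1) (\<lambda>x. a * (weight e1 * F e1 x) + b * (weight e1 * H e1 x))
      (wt G e2) (len G e2) (\<lambda>x. a * (- weight e2 * F e2 x) + b * (- weight e2 * H e2 x))"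
    using v o e A10_valency_2[OF F] A10_valency_2[OF H] A10_smooth[OF F] A10_smooth[OF H]
    by (intro smooth_pair_lin smooth_cl_cmult) auto
  then show "smooth_pair (wt G e1) (len G e1) (\<lambda>x. weight e1 * (a * F e1 x + b * H e1 x))
      (wt G e2) (len G e2) (\<lambda>x. - weight e2 * (a * F e2 x + b * H e2 x))"
    by (simp add: algebra_simps)
next
  fix v assume v: "v \<in> verts G" "3 \<le> valency G v"
  have "(\<Sum>e\<in>out_edges G v. weight e * (a * F e 0 + b * H e 0)) =
      a * (\<Sum>e\<in>out_edges G v. weight e * F e 0) + b * (\<Sum>e\<in>out_edges G v. weight e * H e 0)"
    by (simp add: sum.distrib sum_distrib_left algebra_simps)
  then show "(\<Sum>e\<in>out_edges G v. weight e * (a * F e 0 + b * H e 0)) = 0"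
    using A10_valency_ge_3[OF F v] A10_valency_ge_3[OF H v] by simp
qed

lemma A11_lin:
  assumes F: "A11 G F" and H: "A11 G H"
  shows "A11 G (\<lambda>e t. a * F e t + b * H e t)"
  unfolding A11_def
proof (intro conjI ballI allI impI)
  show "canonical G (\<lambda>e t. a * F e t + b * H e t)"
    using A11_canonical[OF F] A11_canonical[OF H] by (simp add: canonical_def)
  fix e assume e: "e \<in> edges G"
  show "smooth_cl (len G e) (\<lambda>t. a * F e t + b * H e t)"
    using e A11_smooth[OF F] A11_smooth[OF H] by (simp add: smooth_cl_lin)
  fix x assume "x \<in> {0..len G e}"
  then show "a * F (rev G e) x + b * H (rev G e) x = a * F e (len G e - x) + b * H e (len G e - x)"
    using e A11_rev[OF F] A11_rev[OF H] by simp
next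
  fix e assume "e \<in> edges G" "valency G (tail G e) = 1"
  then show "\<exists>\<delta>>0. \<forall>x\<in>{0..len G e}. x < \<delta> \<longrightarrow> a * F e x + b * H e x = 0"
    using A11_valency_1[OF F] A11_valency_1[OF H]
      eventually_eq_lin[where S="{0..len G e}" and F="F e" and H="H e" and c=0 and d=0 and a=a and b=b]
    by simp
next
  fix v e1 e2 assume v: "v \<in> verts G" and o: "out_edges G v = {e1, e2} \<and> e1 \<noteq> e2"
  then have e: "e1 \<in> edges G" "e2 \<in> edges G"
    by (auto simp: in_out_edges_iff)
  have "smooth_pair (wt G e1) (len G e1) (\<lambda>x. a * (weight e1 ^ 2 * F e1 x) + b * (weight e1 ^ 2 * H e1 x))
      (wt G e2) (len G e2) (\<lambda>x. a * (weight e2 ^ 2 * F e2 x) + b * (weight e2 ^ 2 * H e2 x))"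
    using v o e A11_valency_2[OF F] A11_valency_2[OF H] A11_smooth[OF F] A11_smooth[OF H]
    by (intro smooth_pair_lin smooth_cl_cmult) auto
  then show "smooth_pair (wt G e1) (len G e1) (\<lambda>x. weight e1 ^ 2 * (a * F e1 x + b * H e1 x))
      (wt G e2) (len G e2) (\<lambda>x. weight e2 ^ 2 * (a * F e2 x + b * H e2 x))"
    by (simp add: algebra_simps)
qed

lemma smooth_pair_zero: "0 < l1 \<Longrightarrow> 0 < l2 \<Longrightarrow> smooth_pair w1 l1 (\<lambda>x. 0) w2 l2 (\<lambda>x. 0)"
  by (simp add: smooth_pair_def nderiv_const less_imp_le)

lemma out_edges_eq_pairD: "out_edges G v = {e1, e2} \<Longrightarrow> e1 \<in> edges G \<and> e2 \<in> edges G"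
  by (metis insertI1 insertI2 in_out_edges_iff)

lemma A10_zero: "A10 G (\<lambda>e t. 0)"
  unfolding A10_def
  by (auto simp: canonical_def smooth_cl_const smooth_pair_zero dest: out_edges_eq_pairD intro:
    exI[of _ 1])

lemma A11_zero: "A11 G (\<lambda>e t. 0)"
  unfolding A11_def
  by (auto simp: canonical_def smooth_cl_const smooth_pair_zero dest: out_edges_eq_pairD intro:
    exI[of _ 1])

lemma form_subspace_A10: "form_subspace {F. A10 G F}"
  using A10_zero A10_lin by (simp add: form_subspace_def)

lemma form_subspace_A11: "form_subspace {F. A11 G F}"
  using A11_zero A11_lin by (simp add: form_subspace_def)

definition sym_indicator :: "'e \<Rightarrow> 'e \<Rightarrow> real" where
  "sym_indicator e x = (if x = e then 1 else 0) + (if x = rev G e then 1 else 0)"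

lemma sym_indicator_rev: "e \<in> edges G \<Longrightarrow> x \<in> edges G \<Longrightarrow> sym_indicator e (rev G x) = sym_indicator e x"
  unfolding sym_indicator_def using rev_eq_iff[of x e] rev_eq_iff[of x "rev G e"] by auto

lemma sym_indicator_of_rev: "e \<in> edges G \<Longrightarrow> sym_indicator (rev G e) = sym_indicator e"
  by (auto simp: sym_indicator_def fun_eq_iff)

lemma signed_indicator_of_rev: "e \<in> edges G \<Longrightarrow> signed_indicator (rev G e) = (\<lambda>x. - signed_indicator e x)"
  by (auto simp: signed_indicator_def fun_eq_iff)

lemma sum_sym_indicator:
  assumes "e \<in> edges G"
  shows "(\<Sum>x\<in>edges G. f x * sym_indicator e x) = f e + f (rev G e)"
proof -
  have "(\<Sum>x\<in>edges G. f x * sym_indicator e x) =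
      (\<Sum>x\<in>edges G. f x * (if e = x then 1 else 0)) + (\<Sum>x\<in>edges G. f x * (if rev G e = x then 1 else 0))"
    by (simp add: sym_indicator_def distrib_left sum.distrib eq_commute)
  then show ?thesis
    using sum_delta_edges[OF assms, of f] sum_delta_edges[OF rev_in_edges[OF assms], of f] by simp
qed

lemma sum_signed_indicator_at:
  assumes "e \<in> edges G"
  shows "(\<Sum>x\<in>edges G. f x * signed_indicator e x) = f e - f (rev G e)"
proof -
  have "(\<Sum>x\<in>edges G. f x * signed_indicator e x) =
      (\<Sum>x\<in>edges G. f x * (if e = x then 1 else 0)) - (\<Sum>x\<in>edges G. f x * (if rev G e = x then 1 else 0))"
    by (simp add: signed_indicator_def right_diff_distrib sum_subtractf eq_commute)
  then show ?thesis
    using sum_delta_edges[OF assms, of f] sum_delta_edges[OF rev_in_edges[OF assms], of f] by simp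
qed

lemma sum_sym_indicator_symmetric:
  assumes "\<And>x. x \<in> edges G \<Longrightarrow> c (rev G x) = c x" "x \<in> edges G"
  shows "(\<Sum>e\<in>edges G. c e / 2 * sym_indicator e x) = c x"
proof -
  have "(\<Sum>e\<in>edges G. c e / 2 * sym_indicator e x) = (\<Sum>e\<in>edges G. c e / 2 * sym_indicator x e)"
    using assms(2) by (intro sum.cong) (auto simp: sym_indicator_def)
  then show ?thesis
    using sum_sym_indicator[OF assms(2), of "\<lambda>e. c e / 2"] assms by simp
qed

definition edge_integral :: "'e form \<Rightarrow> 'e \<Rightarrow> real" where
  "edge_integral F e = integral {0..len G e} (F e)"

lemma edge_integral_diff:
  assumes "F e integrable_on {0..len G e}" "H e integrable_on {0..len G e}"
  shows "edge_integral (\<lambda>e t. F e t - H e t) e = edge_integral F e - edge_integral H e"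
  using assms by (simp add: edge_integral_def integral_diff)

lemma edge_integral_A11_rev:
  assumes A: "A11 G F" and e: "e \<in> edges G"
  shows "edge_integral F (rev G e) = edge_integral F e"
proof -
  have "edge_integral F (rev G e) = integral {0..len G e} (\<lambda>s. F e (len G e - s))"
    unfolding edge_integral_def len_rev[OF e] by (rule integral_cong) (simp add: A11_rev[OF A e])
  also have "\<dots> = edge_integral F e"
    using e A11_smooth[OF A e]
    by (simp add: edge_integral_def integral_reflect_interval smooth_cl_continuous_on less_imp_le)
  finally show ?thesis .
qed

lemma edge_integral_A10_rev:
  assumes A: "A10 G F" and e: "e \<in> edges G"
  shows "edge_integral F (rev G e) = - edge_integral F e"
proof -
  have "edge_integral F (rev G e) = integral {0..len G e} (\<lambda>s. - F e (len G e - s))"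
    unfolding edge_integral_def len_rev[OF e] by (rule integral_cong) (simp add: A10_rev[OF A e])
  also have "\<dots> = - edge_integral F e"
    using e A10_smooth[OF A e]
    by (simp add: edge_integral_def integral_neg integral_reflect_interval smooth_cl_continuous_on
      less_imp_le)
  finally show ?thesis .
qed

lemma edge_integral_dbar1:
  assumes A: "A10 G F" and e: "e \<in> edges G"
  shows "edge_integral (dbar1 G F) e = F e 0 + F (rev G e) 0"
proof -
  have "edge_integral (dbar1 G F) e = - integral {0..len G e} (nderiv (len G e) (F e) 1)"
    unfolding edge_integral_def integral_neg[symmetric] by (rule integral_cong) (simp add: dbar1_def e)
  also have "\<dots> = F e 0 - F e (len G e)"
    using integral_nderiv_1[OF len_pos[OF e] A10_smooth[OF A e]] by simp
  finally show ?thesis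
    using A10_rev[OF A e, of 0] len_pos[OF e] by simp
qed

lemma edge_integral_dbar0:
  assumes A: "A00 G F" and e: "e \<in> edges G"
  shows "edge_integral (dbar0 G F) e = F (rev G e) 0 - F e 0"
proof -
  have "edge_integral (dbar0 G F) e = integral {0..len G e} (nderiv (len G e) (F e) 1)"
    unfolding edge_integral_def by (rule integral_cong) (simp add: dbar0_def e)
  also have "\<dots> = F e (len G e) - F e 0"
    by (rule integral_nderiv_1[OF len_pos[OF e] A00_smooth[OF A e]])
  finally show ?thesis
    using A00_rev[OF A e, of 0] len_pos[OF e] by simp
qed

section \<open>The harmonic forms\<close>

definition form00 :: "('v \<Rightarrow> real) \<Rightarrow> 'e form" where
  "form00 a = (\<lambda>e t. if e \<in> edges G \<and> t \<in> {0..len G e} then a (tail G e) else 0)"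

definition form10 :: "('e \<Rightarrow> real) \<Rightarrow> 'e form" where
  "form10 h = (\<lambda>e t. if e \<in> edges G \<and> t \<in> {0..len G e} then h e / weight e else 0)"

lemma
  assumes "e \<in> edges G"
  shows smooth_cl_form00: "smooth_cl (len G e) (form00 a e)"
    and nderiv_form00: "x \<in> {0..len G e} \<Longrightarrow>
      nderiv (len G e) (form00 a e) n x = (if n = 0 then a (tail G e) else 0)"
  using assms smooth_cl_eq_const_on[of "len G e" "form00 a e"] nderiv_eq_const_on[of "len G e"
    "form00 a e"]
  by (simp_all add: form00_def)

lemma
  assumes "e \<in> edges G"
  shows smooth_cl_form10: "smooth_cl (len G e) (\<lambda>t. c * form10 h e t)"
    and nderiv_form10: "x \<in> {0..len G e} \<Longrightarrow>
      nderiv (len G e) (\<lambda>t. c * form10 h e t) n x = (if n = 0 then c * h e / weight e else 0)"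
  using assms smooth_cl_eq_const_on[of "len G e" "\<lambda>t. c * form10 h e t"]
    nderiv_eq_const_on[of "len G e" "\<lambda>t. c * form10 h e t"]
  by (simp_all add: form10_def)

lemma form00_eqI: "(\<And>e. e \<in> edges G \<Longrightarrow> a (tail G e) = b (tail G e)) \<Longrightarrow> form00 a = form00 b"
  by (auto simp: form00_def fun_eq_iff)

lemma form10_eqI: "(\<And>e. e \<in> edges G \<Longrightarrow> h e = h' e) \<Longrightarrow> form10 h = form10 h'"
  by (auto simp: form10_def fun_eq_iff)

lemma A00_vertex_values:
  assumes "A00 G F"
  obtains a where "\<And>e. e \<in> edges G \<Longrightarrow> F e 0 = a (tail G e)"
proof
  fix e assume "e \<in> edges G"
  then show "F e 0 = F (some_out_edge (tail G e)) 0"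
    using A00_tail[OF assms] some_out_edge[OF out_edges_tail_nonempty] by metis
qed

lemma form00_in_H00:
  assumes a: "locally_constant a"
  shows "form00 a \<in> H00 G"
proof -
  have "A00 G (form00 a)"
    unfolding A00_def
  proof (intro conjI ballI allI impI)
    show "canonical G (form00 a)"
      by (simp add: canonical_def form00_def)
    show "smooth_cl (len G e) (form00 a e)" if "e \<in> edges G" for e
      using that by (rule smooth_cl_form00)
  next
    fix v e1 e2 assume "v \<in> verts G" "out_edges G v = {e1, e2} \<and> e1 \<noteq> e2"
    then have "e1 \<in> edges G" "e2 \<in> edges G" "tail G e1 = v" "tail G e2 = v"
      by (auto simp: in_out_edges_iff dest: out_edges_eq_pairD)
    then show "smooth_pair (wt G e1) (len G e1) (form00 a e1) (wt G e2) (len G e2) (form00 a e2)"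
      by (simp add: smooth_pair_def nderiv_form00)
  next
    fix v assume "v \<in> verts G"
    show "(\<Sum>e\<in>out_edges G v. weight e * nderiv (len G e) (form00 a e) 1 0) = 0"
      by (rule sum.neutral) (simp add: in_out_edges_iff nderiv_form00)
  qed (use a in \<open>auto simp: form00_def locally_constant_def intro: exI[of _ 1]\<close>)
  moreover have "dbar0 G (form00 a) = (\<lambda>e x. 0)"
    by (auto simp: dbar0_def nderiv_form00 fun_eq_iff)
  ultimately show ?thesis
    by (simp add: H00_def)
qed

lemma H00_imp_form00:
  assumes k: "k \<in> H00 G"
  obtains a where "locally_constant a" "k = form00 a"
proof -
  have A: "A00 G k" and d: "dbar0 G k = (\<lambda>e x. 0)"
    using k by (auto simp: H00_def)
  have const: "k e x = k e 0" if e: "e \<in> edges G" and x: "x \<in> {0..len G e}" for e x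
  proof (rule smooth_cl_nderiv_1_eq_0_imp_const[OF len_pos[OF e] A00_smooth[OF A e] _ x])
    show "nderiv (len G e) (k e) 1 t = 0" if "t \<in> {0..len G e}" for t
      using fun_cong[OF fun_cong[OF d, of e], of t] e that by (simp add: dbar0_def)
  qed
  obtain a where a: "\<And>e. e \<in> edges G \<Longrightarrow> k e 0 = a (tail G e)"
    using A00_vertex_values[OF A] by blast
  show ?thesis
  proof
    show "locally_constant a"
      unfolding locally_constant_def
    proof
      fix e assume e: "e \<in> edges G"
      have "a (head G e) = k e (len G e)"
        using a[of "rev G e"] A00_rev[OF A e, of 0] e less_imp_le[OF len_pos[OF e]] by simp
      then show "a (tail G e) = a (head G e)"
        using const[OF e, of "len G e"] a[OF e] e by (simp add: less_imp_le)
    qed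
    show "k = form00 a"
      using const a canonical_eq_0[OF A00_canonical[OF A]] by (auto simp: form00_def fun_eq_iff)
  qed
qed

lemma H00_eq: "H00 G = form00 ` {a. locally_constant a}"
  using form00_in_H00 H00_imp_form00 by blast

lemma form10_in_H10:
  assumes h: "circulation h"
  shows "form10 h \<in> H10 G"
proof -
  have anti: "h (rev G e) = - h e" if "e \<in> edges G" for e
    using h that by (auto simp: circulation_def antisymmetric_def)
  have div: "divergence h v = 0" if "v \<in> verts G" for v
    using h that by (auto simp: circulation_def)
  have "A10 G (form10 h)"
    unfolding A10_def
  proof (intro conjI ballI allI impI)
    show "canonical G (form10 h)"
      by (simp add: canonical_def form10_def)
  next
    fix e assume "e \<in> edges G" "valency G (tail G e) = 1"
    then have "h e = 0"
      using div[of "tail G e"] valency_1_out_edges by (simp add: divergence_def)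
    then show "\<exists>\<delta>>0. \<forall>x\<in>{0..len G e}. x < \<delta> \<longrightarrow> form10 h e x = 0"
      by (intro exI[of _ 1]) (simp add: form10_def)
  next
    fix v e1 e2 assume v: "v \<in> verts G" and o: "out_edges G v = {e1, e2} \<and> e1 \<noteq> e2"
    then have "e1 \<in> edges G" "e2 \<in> edges G" "h e1 + h e2 = 0"
      using div[OF v] by (auto simp: divergence_def dest: out_edges_eq_pairD)
    then show "smooth_pair (wt G e1) (len G e1) (\<lambda>x. weight e1 * form10 h e1 x)
        (wt G e2) (len G e2) (\<lambda>x. - weight e2 * form10 h e2 x)"
      using nderiv_form10[of e1 0 "weight e1"] nderiv_form10[of e2 0 "- weight e2"]
      by (simp add: smooth_pair_def)
  next
    fix v assume "v \<in> verts G"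
    have "(\<Sum>e\<in>out_edges G v. weight e * form10 h e 0) = (\<Sum>e\<in>out_edges G v. h e)"
      by (rule sum.cong) (auto simp: in_out_edges_iff form10_def)
    then show "(\<Sum>e\<in>out_edges G v. weight e * form10 h e 0) = 0"
      using div[OF \<open>v \<in> verts G\<close>] by (simp add: divergence_def)
  qed (use anti smooth_cl_form10[where c=1] in \<open>auto simp: form10_def\<close>)
  moreover have "dbar1 G (form10 h) = (\<lambda>e x. 0)"
    using nderiv_form10[where c=1] by (auto simp: dbar1_def fun_eq_iff)
  ultimately show ?thesis
    by (simp add: H10_def)
qed

lemma H10_imp_form10:
  assumes k: "k \<in> H10 G"
  obtains h where "circulation h" "k = form10 h"
proof -
  have A: "A10 G k" and d: "dbar1 G k = (\<lambda>e x. 0)"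
    using k by (auto simp: H10_def)
  have const: "k e x = k e 0" if e: "e \<in> edges G" and x: "x \<in> {0..len G e}" for e x
  proof (rule smooth_cl_nderiv_1_eq_0_imp_const[OF len_pos[OF e] A10_smooth[OF A e] _ x])
    show "nderiv (len G e) (k e) 1 t = 0" if "t \<in> {0..len G e}" for t
      using fun_cong[OF fun_cong[OF d, of e], of t] e that by (simp add: dbar1_def)
  qed
  define h where "h e = weight e * k e 0" for e
  show ?thesis
  proof
    have "antisymmetric h"
      unfolding antisymmetric_def
    proof
      fix e assume e: "e \<in> edges G"
      have "k (rev G e) 0 = - k e 0"
        using A10_rev[OF A e, of 0] const[OF e, of "len G e"] e by simp
      then show "h (rev G e) = - h e"
        using e by (simp add: h_def)
    qed
    moreover have "divergence h v = 0" if "v \<in> verts G" for v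
      using A10_flux[OF A that] by (simp add: divergence_def h_def)
    ultimately show "circulation h"
      by (simp add: circulation_def)
    show "k = form10 h"
    proof (intro ext)
      fix e t
      show "k e t = form10 h e t"
        using const[of e t] canonical_eq_0[OF A10_canonical[OF A], of e t] by (simp add: form10_def h_def)
    qed
  qed
qed

lemma H10_eq: "H10 G = form10 ` {h. circulation h}"
  using form10_in_H10 H10_imp_form10 by blast

lemma form00_sum: "(\<lambda>e t. \<Sum>i\<in>I. c i * form00 (f i) e t) = form00 (\<lambda>v. \<Sum>i\<in>I. c i * f i v)"
  by (auto simp: form00_def fun_eq_iff)

lemma form10_sum: "(\<lambda>e t. \<Sum>i\<in>I. c i * form10 (f i) e t) = form10 (\<lambda>e. \<Sum>i\<in>I. c i * f i e)"
  by (auto simp: form10_def fun_eq_iff sum_divide_distrib)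

lemma form_subspace_H00: "form_subspace (H00 G)"
proof -
  have "(\<lambda>e t. a * form00 x e t + b * form00 y e t) = form00 (\<lambda>v. a * x v + b * y v)" for a b x y
    by (auto simp: form00_def fun_eq_iff)
  moreover have "(\<lambda>e t. 0) = form00 (\<lambda>v. 0)"
    by (simp add: form00_def fun_eq_iff)
  ultimately show ?thesis
    unfolding form_subspace_def H00_eq by (auto simp: locally_constant_def)
qed

lemma form_subspace_H10: "form_subspace (H10 G)"
proof -
  have "(\<lambda>e t. a * form10 x e t + b * form10 y e t) = form10 (\<lambda>e. a * x e + b * y e)" for a b x y
    by (auto simp: form10_def fun_eq_iff add_divide_distrib)
  moreover have "(\<lambda>e t. 0) = form10 (\<lambda>e. 0)"
    by (simp add: form10_def fun_eq_iff)
  ultimately show ?thesis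
    unfolding form_subspace_def H10_eq
    by (auto simp: circulation_def antisymmetric_def divergence_def sum.distrib
      sum_distrib_left[symmetric])
qed

lemma integral_graph_form00:
  "integral_graph G (wedge (form00 a) \<Omega>) = (\<Sum>e\<in>edges G. weight e * a (tail G e) * edge_integral \<Omega> e) / 2"
proof -
  have "integral {0..len G e} (wedge (form00 a) \<Omega> e) = a (tail G e) * edge_integral \<Omega> e"
    if "e \<in> edges G" for e
    unfolding edge_integral_def integral_mult_right[symmetric]
    by (rule integral_cong) (simp add: wedge_def form00_def that)
  then show ?thesis
    unfolding integral_graph_def by (simp add: mult.assoc)
qed

lemma integral_graph_form10:
  "integral_graph G (wedge (form10 h) \<beta>) = (\<Sum>e\<in>edges G. h e * edge_integral \<beta> e) / 2"
proof -
  have "weight e * integral {0..len G e} (wedge (form10 h) \<beta> e) = h e * edge_integral \<beta> e"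
    if "e \<in> edges G" for e
  proof -
    have "integral {0..len G e} (wedge (form10 h) \<beta> e) = integral {0..len G e} (\<lambda>t. h e / weight e *
      \<beta> e t)"
      by (rule integral_cong) (simp add: wedge_def form10_def that)
    then show ?thesis
      using that by (simp add: edge_integral_def)
  qed
  then show ?thesis
    unfolding integral_graph_def by simp
qed

section \<open>Bump forms\<close>

text \<open>The bump is flat at both ends, so all conditions at the vertices hold trivially.\<close>

definition bump_form :: "('e \<Rightarrow> real) \<Rightarrow> 'e form" where
  "bump_form c = (\<lambda>x t. if x \<in> edges G \<and> t \<in> {0..len G x} then c x * bump (len G x) t else 0)"

lemma bump_form_sum: "bump_form (\<lambda>x. \<Sum>i\<in>I. d i * c i x) = (\<lambda>x t. \<Sum>i\<in>I. d i * bump_form (c i) x t)"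
  by (auto simp: bump_form_def fun_eq_iff sum_distrib_right mult.assoc)

lemma bump_form_lin: "bump_form (\<lambda>x. a * c x + b * d x) = (\<lambda>x t. a * bump_form c x t + b * bump_form
  d x t)"
  by (auto simp: bump_form_def fun_eq_iff algebra_simps)

lemma bump_form_cong: "(\<And>x. x \<in> edges G \<Longrightarrow> c x = d x) \<Longrightarrow> bump_form c = bump_form d"
  by (auto simp: bump_form_def fun_eq_iff)

lemma
  assumes x: "x \<in> edges G"
  shows smooth_cl_bump_form: "smooth_cl (len G x) (\<lambda>t. k * bump_form c x t)"
    and nderiv_bump_form_at_0: "nderiv (len G x) (\<lambda>t. k * bump_form c x t) n 0 = 0"
    and bump_form_near_0: "t < len G x / 3 \<Longrightarrow> bump_form c x t = 0"
    and edge_integral_bump_form: "edge_integral (bump_form c) x = c x"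
proof -
  have eq: "k * bump_form c x t = (k * c x) * bump (len G x) t" if "t \<in> {0..len G x}" for t k
    using x that by (simp add: bump_form_def)
  show "smooth_cl (len G x) (\<lambda>t. k * bump_form c x t)"
    using smooth_cl_cong[OF eq] smooth_cl_cmult[OF len_pos[OF x] smooth_cl_bump] by simp
  show "nderiv (len G x) (\<lambda>t. k * bump_form c x t) n 0 = 0"
    using nderiv_cong[OF eq] nderiv_cmult[OF len_pos[OF x] smooth_cl_bump] nderiv_bump_at_0 x by simp
  show "t < len G x / 3 \<Longrightarrow> bump_form c x t = 0"
    by (simp add: bump_form_def bump_eq_0)
  have "edge_integral (bump_form c) x = integral {0..len G x} (\<lambda>t. c x * bump (len G x) t)"
    unfolding edge_integral_def by (rule integral_cong) (use eq[where k=1] in simp)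
  then show "edge_integral (bump_form c) x = c x"
    using integral_bump[OF len_pos[OF x]] by simp
qed

lemma bump_form_eventually_0:
  "x \<in> edges G \<Longrightarrow> \<exists>\<delta>>0. \<forall>t\<in>{0..len G x}. t < \<delta> \<longrightarrow> bump_form c x t = 0"
  using bump_form_near_0 by (intro exI[of _ "len G x / 3"]) simp

lemma bump_form_rev:
  assumes x: "x \<in> edges G" and t: "t \<in> {0..len G x}"
  shows "bump_form c (rev G x) t = c (rev G x) * bump (len G x) (len G x - t)"
  using x t by (simp add: bump_form_def bump_reflect)

lemma A11_bump_form:
  assumes c: "\<And>x. x \<in> edges G \<Longrightarrow> c (rev G x) = c x"
  shows "A11 G (bump_form c)"
  unfolding A11_def
proof (intro conjI ballI allI impI)
  show "canonical G (bump_form c)"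
    by (simp add: canonical_def bump_form_def)
  fix x assume x: "x \<in> edges G"
  show "smooth_cl (len G x) (bump_form c x)"
    using smooth_cl_bump_form[OF x, of 1] by simp
  fix t assume "t \<in> {0..len G x}"
  then show "bump_form c (rev G x) t = bump_form c x (len G x - t)"
    using x c[OF x] by (simp add: bump_form_rev) (simp add: bump_form_def)
next
  fix x assume "x \<in> edges G"
  then show "\<exists>\<delta>>0. \<forall>t\<in>{0..len G x}. t < \<delta> \<longrightarrow> bump_form c x t = 0"
    by (rule bump_form_eventually_0)
next
  fix v e1 e2 assume "v \<in> verts G" "out_edges G v = {e1, e2} \<and> e1 \<noteq> e2"
  then have "e1 \<in> edges G" "e2 \<in> edges G"
    by (auto dest: out_edges_eq_pairD)
  then show "smooth_pair (wt G e1) (len G e1) (\<lambda>t. weight e1 ^ 2 * bump_form c e1 t)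
      (wt G e2) (len G e2) (\<lambda>t. weight e2 ^ 2 * bump_form c e2 t)"
    by (simp add: smooth_pair_def nderiv_bump_form_at_0)
qed

lemma A10_bump_form:
  assumes c: "antisymmetric c"
  shows "A10 G (bump_form c)"
  unfolding A10_def
proof (intro conjI ballI allI impI)
  show "canonical G (bump_form c)"
    by (simp add: canonical_def bump_form_def)
  fix x assume x: "x \<in> edges G"
  show "smooth_cl (len G x) (bump_form c x)"
    using smooth_cl_bump_form[OF x, of 1] by simp
  fix t assume "t \<in> {0..len G x}"
  then show "bump_form c (rev G x) t = - bump_form c x (len G x - t)"
    using x c by (simp add: bump_form_rev antisymmetric_def) (simp add: bump_form_def)
next
  fix x assume "x \<in> edges G"
  then show "\<exists>\<delta>>0. \<forall>t\<in>{0..len G x}. t < \<delta> \<longrightarrow> bump_form c x t = 0"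
    by (rule bump_form_eventually_0)
next
  fix v e1 e2 assume "v \<in> verts G" "out_edges G v = {e1, e2} \<and> e1 \<noteq> e2"
  then have "e1 \<in> edges G" "e2 \<in> edges G"
    by (auto dest: out_edges_eq_pairD)
  then show "smooth_pair (wt G e1) (len G e1) (\<lambda>t. weight e1 * bump_form c e1 t)
      (wt G e2) (len G e2) (\<lambda>t. - weight e2 * bump_form c e2 t)"
    unfolding smooth_pair_def
    using nderiv_bump_form_at_0[of e1 "weight e1" c] nderiv_bump_form_at_0[of e2 "- weight e2" c] by simp
next
  fix v assume "v \<in> verts G"
  show "(\<Sum>x\<in>out_edges G v. weight x * bump_form c x 0) = 0"
    by (rule sum.neutral) (simp add: in_out_edges_iff bump_form_near_0)
qed

section \<open>Stokes' theorem and its converse\<close>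

lemma sum_weighted_edge_integral_dbar1:
  assumes A: "A10 G \<alpha>" and a: "locally_constant a"
  shows "(\<Sum>e\<in>edges G. weight e * a (tail G e) * edge_integral (dbar1 G \<alpha>) e) = 0"
proof -
  have "(\<Sum>e\<in>edges G. weight e * a (tail G e) * \<alpha> (rev G e) 0) =
      (\<Sum>e\<in>edges G. weight (rev G e) * a (tail G (rev G e)) * \<alpha> (rev G (rev G e)) 0)"
    by (rule sum_edges_rev[symmetric])
  also have "\<dots> = (\<Sum>e\<in>edges G. weight e * a (tail G e) * \<alpha> e 0)"
    using a by (intro sum.cong) (auto simp: locally_constant_def)
  finally have "(\<Sum>e\<in>edges G. weight e * a (tail G e) * edge_integral (dbar1 G \<alpha>) e) =
      2 * (\<Sum>e\<in>edges G. (weight e * \<alpha> e 0) * a (tail G e))"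
    by (simp add: edge_integral_dbar1[OF A] distrib_left sum.distrib mult_ac)
  also have "\<dots> = 2 * (\<Sum>v\<in>verts G. a v * (\<Sum>e\<in>out_edges G v. weight e * \<alpha> e 0))"
    using sum_edges_by_tail[of "\<lambda>e. weight e * \<alpha> e 0" a] by simp
  also have "\<dots> = 0"
    using A10_flux[OF A] by simp
  finally show ?thesis .
qed

lemma sum_edge_integral_dbar0:
  assumes A: "A00 G f" and h: "circulation h"
  shows "(\<Sum>e\<in>edges G. h e * edge_integral (dbar0 G f) e) = 0"
proof -
  obtain b where b: "\<And>e. e \<in> edges G \<Longrightarrow> f e 0 = b (tail G e)"
    using A00_vertex_values[OF A] by blast
  have "(\<Sum>e\<in>edges G. h e * edge_integral (dbar0 G f) e) = inner_on (edges G) h (gradient b)"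
    unfolding inner_on_def
    by (intro sum.cong) (simp_all add: edge_integral_dbar0[OF A] b gradient_def)
  also have "\<dots> = 0"
    using h inner_on_gradient by (simp add: circulation_def)
  finally show ?thesis .
qed

text \<open>Primitives, edge by edge, with prescribed values at the tails: \<open>primitive10 \<Theta> g\<close> has
  value \<open>g e / w e\<close> at the tail of \<open>e\<close> and \<open>d''\<close>-derivative \<open>\<Theta>\<close> (note \<open>d''\<close> of a (1,0)-form is
  \<open>-f'\<close>); \<open>primitive00 \<beta> a\<close> has value \<open>a v\<close> at \<open>v\<close> and \<open>d''\<close>-derivative \<open>\<beta>\<close>.\<close>

definition primitive10 :: "'e form \<Rightarrow> ('e \<Rightarrow> real) \<Rightarrow> 'e form" where
  "primitive10 \<Theta> g = (\<lambda>e t. if e \<in> edges G \<and> t \<in> {0..len G e}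
      then g e / weight e + integral {0..t} (\<lambda>s. - \<Theta> e s) else 0)"

definition primitive00 :: "'e form \<Rightarrow> ('v \<Rightarrow> real) \<Rightarrow> 'e form" where
  "primitive00 \<beta> a = (\<lambda>e t. if e \<in> edges G \<and> t \<in> {0..len G e}
      then a (tail G e) + integral {0..t} (\<beta> e) else 0)"

lemma integral_initial_segment_rev:
  assumes e: "e \<in> edges G" and t: "t \<in> {0..len G e}" and smooth: "smooth_cl (len G e) (F e)"
    and F_rev: "\<And>x. x \<in> {0..len G e} \<Longrightarrow> F (rev G e) x = s * F e (len G e - x)"
  shows "integral {0..t} (F (rev G e)) = s * (edge_integral F e - integral {0..len G e - t} (F e))"
proof -
  have "integral {0..t} (F (rev G e)) = integral {0..t} (\<lambda>x. s * F e (len G e - x))"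
    using t by (intro integral_cong) (simp add: F_rev)
  then show ?thesis
    using integral_reflect_initial_segment[OF smooth_cl_continuous_on[OF len_pos[OF e] smooth] t]
    by (simp add: edge_integral_def)
qed

lemma
  assumes \<Theta>: "A11 G \<Theta>" and e: "e \<in> edges G"
  shows primitive10_on_edge:
      "t \<in> {0..len G e} \<Longrightarrow> primitive10 \<Theta> g e t = g e / weight e + integral {0..t} (\<lambda>s. - \<Theta> e s)"
    and smooth_cl_neg_A11: "smooth_cl (len G e) (\<lambda>s. - \<Theta> e s)"
    and smooth_cl_primitive10: "smooth_cl (len G e) (primitive10 \<Theta> g e)"
    and nderiv_primitive10: "x \<in> {0..len G e} \<Longrightarrow> nderiv (len G e) (primitive10 \<Theta> g e) 1 x = - \<Theta> e x"
proof -
  show on_edge: "primitive10 \<Theta> g e t = g e / weight e + integral {0..t} (\<lambda>s. - \<Theta> e s)"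
    if "t \<in> {0..len G e}" for t
    using e that by (simp add: primitive10_def)
  show smooth: "smooth_cl (len G e) (\<lambda>s. - \<Theta> e s)"
    using smooth_cl_cmult[OF len_pos[OF e] A11_smooth[OF \<Theta> e], of "-1"] by simp
  show "smooth_cl (len G e) (primitive10 \<Theta> g e)"
    using smooth_cl_scaled_primitive[OF len_pos[OF e] smooth, of "primitive10 \<Theta> g e" 1] on_edge by simp
  show "nderiv (len G e) (primitive10 \<Theta> g e) 1 x = - \<Theta> e x" if x: "x \<in> {0..len G e}"
    using nderiv_cong[of "len G e" "primitive10 \<Theta> g e", OF on_edge]
      nderiv_primitive[OF len_pos[OF e] smooth x] nderiv_0[OF len_pos[OF e] smooth x]
    by simp
qed

lemma primitive10_rev:
  assumes \<Theta>: "A11 G \<Theta>" and e: "e \<in> edges G" and t: "t \<in> {0..len G e}"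
    and g_rev: "g e + g (rev G e) = weight e * edge_integral \<Theta> e"
  shows "primitive10 \<Theta> g (rev G e) t = - primitive10 \<Theta> g e (len G e - t)"
proof -
  have "integral {0..t} (\<Theta> (rev G e)) = edge_integral \<Theta> e - integral {0..len G e - t} (\<Theta> e)"
    using integral_initial_segment_rev[where F=\<Theta> and s=1, OF e t A11_smooth[OF \<Theta> e]] A11_rev[OF \<Theta> e]
    by simp
  moreover have "g (rev G e) / weight e = edge_integral \<Theta> e - g e / weight e"
    using g_rev weight_pos[OF e] by (simp add: field_simps)
  ultimately show ?thesis
    using e t by (simp add: primitive10_def integral_neg)
qed

lemma primitive10_smooth_pair:
  assumes \<Theta>: "A11 G \<Theta>" and v: "v \<in> verts G" and o: "out_edges G v = {e1, e2}" "e1 \<noteq> e2"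
    and g: "g e1 + g e2 = 0"
  shows "smooth_pair (wt G e1) (len G e1) (\<lambda>x. weight e1 * primitive10 \<Theta> g e1 x)
      (wt G e2) (len G e2) (\<lambda>x. - weight e2 * primitive10 \<Theta> g e2 x)"
proof -
  have e: "e1 \<in> edges G" "e2 \<in> edges G"
    using o by (auto dest: out_edges_eq_pairD)
  have init: "weight e1 * (g e1 / weight e1) = - weight e2 * (g e2 / weight e2)"
    using e g by simp
  have "smooth_pair (wt G e1) (len G e1) (\<lambda>x. -1 * (weight e1 ^ 2 * \<Theta> e1 x))
      (wt G e2) (len G e2) (\<lambda>x. -1 * (weight e2 ^ 2 * \<Theta> e2 x))"
    using v o e A11_valency_2[OF \<Theta>] A11_smooth[OF \<Theta>]
    by (intro smooth_pair_cmult smooth_cl_cmult) auto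
  moreover have "(\<lambda>x. -1 * (weight e1 ^ 2 * \<Theta> e1 x)) = (\<lambda>t. weight e1 * weight e1 * - \<Theta> e1 t)"
    and "(\<lambda>x. -1 * (weight e2 ^ 2 * \<Theta> e2 x)) = (\<lambda>t. - weight e2 * - weight e2 * - \<Theta> e2 t)"
    by (simp_all add: fun_eq_iff power2_eq_square)
  ultimately have "smooth_pair (wt G e1) (len G e1) (\<lambda>t. weight e1 * weight e1 * - \<Theta> e1 t)
      (wt G e2) (len G e2) (\<lambda>t. - weight e2 * - weight e2 * - \<Theta> e2 t)"
    by simp
  then show ?thesis
    by (rule smooth_pair_primitive[OF len_pos[OF e(1)] len_pos[OF e(2)]
          smooth_cl_neg_A11[OF \<Theta> e(1)] smooth_cl_neg_A11[OF \<Theta> e(2)] init])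
       (simp_all add: primitive10_on_edge[OF \<Theta>] e)
qed

lemma
  assumes \<Theta>: "A11 G \<Theta>"
    and g_rev: "\<And>e. e \<in> edges G \<Longrightarrow> g e + g (rev G e) = weight e * edge_integral \<Theta> e"
    and g_div: "\<And>v. v \<in> verts G \<Longrightarrow> divergence g v = 0"
  shows A10_primitive10: "A10 G (primitive10 \<Theta> g)"
    and dbar1_primitive10: "dbar1 G (primitive10 \<Theta> g) = \<Theta>"
proof -
  show "A10 G (primitive10 \<Theta> g)"
    unfolding A10_def
  proof (intro conjI ballI allI impI)
    show "canonical G (primitive10 \<Theta> g)"
      by (simp add: canonical_def primitive10_def)
  next
    fix e assume e: "e \<in> edges G" and "valency G (tail G e) = 1"
    then have "g e = 0"
      using g_div[of "tail G e"] valency_1_out_edges by (simp add: divergence_def)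
    moreover obtain \<delta> where "\<delta> > 0" "\<forall>x\<in>{0..len G e}. x < \<delta> \<longrightarrow> \<Theta> e x = 0"
      using A11_valency_1[OF \<Theta> e] \<open>valency G (tail G e) = 1\<close> by blast
    ultimately show "\<exists>\<delta>>0. \<forall>x\<in>{0..len G e}. x < \<delta> \<longrightarrow> primitive10 \<Theta> g e x = 0"
      using integral_eq_0_near_0[of "len G e" \<delta> "\<lambda>s. - \<Theta> e s"]
      by (intro exI[of _ \<delta>]) (simp add: primitive10_def)
  next
    fix v e1 e2 assume v: "v \<in> verts G" and o: "out_edges G v = {e1, e2} \<and> e1 \<noteq> e2"
    then have "g e1 + g e2 = 0"
      using g_div[OF v] by (auto simp: divergence_def)
    then show "smooth_pair (wt G e1) (len G e1) (\<lambda>x. weight e1 * primitive10 \<Theta> g e1 x)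
        (wt G e2) (len G e2) (\<lambda>x. - weight e2 * primitive10 \<Theta> g e2 x)"
      using primitive10_smooth_pair[OF \<Theta> v] o by blast
  next
    fix v assume v: "v \<in> verts G"
    have "(\<Sum>e\<in>out_edges G v. weight e * primitive10 \<Theta> g e 0) = divergence g v"
      unfolding divergence_def by (rule sum.cong) (auto simp: in_out_edges_iff primitive10_def)
    then show "(\<Sum>e\<in>out_edges G v. weight e * primitive10 \<Theta> g e 0) = 0"
      using g_div[OF v] by simp
  qed (use smooth_cl_primitive10[OF \<Theta>] primitive10_rev[OF \<Theta> _ _ g_rev] in auto)
  show "dbar1 G (primitive10 \<Theta> g) = \<Theta>"
    using nderiv_primitive10[OF \<Theta>] canonical_eq_0[OF A11_canonical[OF \<Theta>]]
    by (auto simp: dbar1_def fun_eq_iff)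
qed

lemma
  assumes \<beta>: "A10 G \<beta>" and e: "e \<in> edges G"
  shows primitive00_on_edge:
      "t \<in> {0..len G e} \<Longrightarrow> primitive00 \<beta> a e t = a (tail G e) + integral {0..t} (\<beta> e)"
    and smooth_cl_primitive00: "smooth_cl (len G e) (primitive00 \<beta> a e)"
    and nderiv_primitive00: "x \<in> {0..len G e} \<Longrightarrow> nderiv (len G e) (primitive00 \<beta> a e) 1 x = \<beta> e x"
proof -
  show on_edge: "primitive00 \<beta> a e t = a (tail G e) + integral {0..t} (\<beta> e)" if "t \<in> {0..len G e}" for t
    using e that by (simp add: primitive00_def)
  show "smooth_cl (len G e) (primitive00 \<beta> a e)"
    using smooth_cl_scaled_primitive[OF len_pos[OF e] A10_smooth[OF \<beta> e], of "primitive00 \<beta> a e" 1]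
      on_edge
    by simp
  show "nderiv (len G e) (primitive00 \<beta> a e) 1 x = \<beta> e x" if x: "x \<in> {0..len G e}"
    using nderiv_cong[of "len G e" "primitive00 \<beta> a e", OF on_edge]
      nderiv_primitive[OF len_pos[OF e] A10_smooth[OF \<beta> e] x]
      nderiv_0[OF len_pos[OF e] A10_smooth[OF \<beta> e] x]
    by simp
qed

lemma primitive00_rev:
  assumes \<beta>: "A10 G \<beta>" and e: "e \<in> edges G" and t: "t \<in> {0..len G e}"
    and grad: "edge_integral \<beta> e = gradient a e"
  shows "primitive00 \<beta> a (rev G e) t = primitive00 \<beta> a e (len G e - t)"
proof -
  have "integral {0..t} (\<beta> (rev G e)) = - (edge_integral \<beta> e - integral {0..len G e - t} (\<beta> e))"
    using integral_initial_segment_rev[where F=\<beta> and s="-1", OF e t A10_smooth[OF \<beta> e]] A10_rev[OF \<beta> e]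
    by simp
  then show ?thesis
    using e t grad by (simp add: primitive00_def gradient_def)
qed

lemma primitive00_smooth_pair:
  assumes \<beta>: "A10 G \<beta>" and v: "v \<in> verts G" and o: "out_edges G v = {e1, e2}" "e1 \<noteq> e2"
  shows "smooth_pair (wt G e1) (len G e1) (primitive00 \<beta> a e1) (wt G e2) (len G e2) (primitive00 \<beta> a e2)"
proof -
  have e: "e1 \<in> edges G" "e2 \<in> edges G" and tails: "tail G e1 = v" "tail G e2 = v"
    using o by (auto simp: in_out_edges_iff dest: out_edges_eq_pairD)
  have "smooth_pair (wt G e1) (len G e1) (\<lambda>t. weight e1 * 1 * \<beta> e1 t)
      (wt G e2) (len G e2) (\<lambda>t. - weight e2 * 1 * \<beta> e2 t)"
    using A10_valency_2[OF \<beta> v o] by simp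
  then show ?thesis
    by (rule smooth_pair_primitive[where p="a v" and q="a v" and c=1 and d=1,
          OF len_pos[OF e(1)] len_pos[OF e(2)] A10_smooth[OF \<beta> e(1)] A10_smooth[OF \<beta> e(2)] refl])
       (simp_all add: primitive00_on_edge[OF \<beta>] e tails)
qed

lemma
  assumes \<beta>: "A10 G \<beta>" and grad: "\<And>e. e \<in> edges G \<Longrightarrow> edge_integral \<beta> e = gradient a e"
  shows A00_primitive00: "A00 G (primitive00 \<beta> a)"
    and dbar0_primitive00: "dbar0 G (primitive00 \<beta> a) = \<beta>"
proof -
  show "A00 G (primitive00 \<beta> a)"
    unfolding A00_def
  proof (intro conjI ballI allI impI)
    show "canonical G (primitive00 \<beta> a)"
      by (simp add: canonical_def primitive00_def)
  next
    fix e assume e: "e \<in> edges G" and "valency G (tail G e) = 1"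
    then obtain \<delta> where "\<delta> > 0" "\<forall>x\<in>{0..len G e}. x < \<delta> \<longrightarrow> \<beta> e x = 0"
      using A10_valency_1[OF \<beta> e] by blast
    then show "\<exists>\<delta>>0. \<forall>x\<in>{0..len G e}. x < \<delta> \<longrightarrow> primitive00 \<beta> a e x = primitive00 \<beta> a e 0"
      using integral_eq_0_near_0[of "len G e" \<delta> "\<beta> e"] e
      by (intro exI[of _ \<delta>]) (simp add: primitive00_def)
  next
    fix v assume v: "v \<in> verts G" "3 \<le> valency G v"
    have "(\<Sum>e\<in>out_edges G v. weight e * nderiv (len G e) (primitive00 \<beta> a e) 1 0) =
        (\<Sum>e\<in>out_edges G v. weight e * \<beta> e 0)"
      by (rule sum.cong) (use nderiv_primitive00[OF \<beta>] in \<open>auto simp: in_out_edges_iff\<close>)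
    then show "(\<Sum>e\<in>out_edges G v. weight e * nderiv (len G e) (primitive00 \<beta> a e) 1 0) = 0"
      using A10_valency_ge_3[OF \<beta> v] by simp
  qed (use smooth_cl_primitive00[OF \<beta>] primitive00_rev[OF \<beta> _ _ grad] primitive00_smooth_pair[OF \<beta>] in
      \<open>auto simp: primitive00_def\<close>)
  show "dbar0 G (primitive00 \<beta> a) = \<beta>"
    using nderiv_primitive00[OF \<beta>] canonical_eq_0[OF A10_canonical[OF \<beta>]]
    by (auto simp: dbar0_def fun_eq_iff)
qed

text \<open>Exactness in degree (1,1): the weighted edge integrals of \<open>\<Theta>\<close> are orthogonal to the locally
  constant functions, hence (up to the factor \<open>-1/2\<close>) a divergence \<open>div h\<close>; the initial values
  of the primitive split each edge integral symmetrically and are corrected by \<open>h\<close> to have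
  divergence 0.\<close>

lemma dbar1_image_if_orthogonal:
  assumes \<Theta>: "A11 G \<Theta>"
    and orth: "\<And>a. locally_constant a \<Longrightarrow> (\<Sum>e\<in>edges G. weight e * a (tail G e) * edge_integral \<Theta> e) = 0"
  shows "\<Theta> \<in> dbar1 G ` {\<alpha>. A10 G \<alpha>}"
proof -
  define u where "u e = weight e * edge_integral \<Theta> e" for e
  have "inner_on (verts G) (\<lambda>v. - (1/2) * divergence u v) a = 0" if "locally_constant a" for a
  proof -
    have "inner_on (verts G) (\<lambda>v. - (1/2) * divergence u v) a = - (1/2) * (\<Sum>v\<in>verts G. a v *
      divergence u v)"
      by (simp add: inner_on_def sum_distrib_left mult_ac)
    also have "(\<Sum>v\<in>verts G. a v * divergence u v) = (\<Sum>e\<in>edges G. weight e * a (tail G e) *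
      edge_integral \<Theta> e)"
      unfolding divergence_def sum_edges_by_tail[symmetric] by (simp add: u_def mult_ac)
    finally show ?thesis
      using orth[OF that] by simp
  qed
  then obtain h where h: "antisymmetric h" "\<And>v. v \<in> verts G \<Longrightarrow> divergence h v = - (1/2) * divergence u v"
    using orthogonal_locally_constant_imp_divergence by blast
  define g where "g e = u e / 2 + h e" for e
  have g_rev: "g e + g (rev G e) = weight e * edge_integral \<Theta> e" if "e \<in> edges G" for e
    using h(1) that edge_integral_A11_rev[OF \<Theta> that] by (simp add: g_def u_def antisymmetric_def)
  have g_div: "divergence g v = 0" if "v \<in> verts G" for v
    using h(2)[OF that] by (simp add: g_def divergence_def sum.distrib sum_divide_distrib)
  show ?thesis
    using A10_primitive10[OF \<Theta> g_rev g_div] dbar1_primitive10[OF \<Theta> g_rev g_div]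
    by (intro image_eqI[of _ _ "primitive10 \<Theta> g"]) simp_all
qed

lemma dbar0_image_if_orthogonal:
  assumes \<beta>: "A01 G \<beta>"
    and orth: "\<And>h. circulation h \<Longrightarrow> (\<Sum>e\<in>edges G. h e * edge_integral \<beta> e) = 0"
  shows "\<beta> \<in> dbar0 G ` {f. A00 G f}"
proof -
  have \<beta>': "A10 G \<beta>"
    using \<beta> by (simp add: A01_def)
  have "antisymmetric (edge_integral \<beta>)"
    using \<beta>' edge_integral_A10_rev by (simp add: antisymmetric_def)
  moreover have "inner_on (edges G) h (edge_integral \<beta>) = 0" if "circulation h" for h
    using orth[OF that] by (simp add: inner_on_def)
  ultimately obtain a where grad: "\<And>e. e \<in> edges G \<Longrightarrow> edge_integral \<beta> e = gradient a e"
    using orthogonal_circulations_imp_gradient by blast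
  show ?thesis
    using A00_primitive00[OF \<beta>' grad] dbar0_primitive00[OF \<beta>' grad]
    by (intro image_eqI[of _ _ "primitive00 \<beta> a"]) simp_all
qed

lemma dbar1_image_diff:
  assumes y: "A11 G y" and y': "A11 G y'"
    and eq: "\<And>a. locally_constant a \<Longrightarrow> (\<Sum>e\<in>edges G. weight e * a (tail G e) * edge_integral y e) =
                                         (\<Sum>e\<in>edges G. weight e * a (tail G e) * edge_integral y' e)"
  shows "(\<lambda>e t. y e t - y' e t) \<in> dbar1 G ` {\<alpha>. A10 G \<alpha>}"
proof (rule dbar1_image_if_orthogonal)
  show "A11 G (\<lambda>e t. y e t - y' e t)"
    using A11_lin[OF y y', of 1 "-1"] by simp
  fix a assume "locally_constant a"
  then show "(\<Sum>e\<in>edges G. weight e * a (tail G e) * edge_integral (\<lambda>e t. y e t - y' e t) e) = 0"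
    using eq A11_smooth[OF y] A11_smooth[OF y']
    by (simp add: edge_integral_diff smooth_cl_integrable right_diff_distrib sum_subtractf)
qed

lemma form_subspace_A01: "form_subspace {\<beta>. A01 G \<beta>}"
  using form_subspace_A10 by (simp add: A01_def[abs_def])

lemma dbar0_image_diff:
  assumes y: "A01 G y" and y': "A01 G y'"
    and eq: "\<And>h. circulation h \<Longrightarrow>
      (\<Sum>e\<in>edges G. h e * edge_integral y e) = (\<Sum>e\<in>edges G. h e * edge_integral y' e)"
  shows "(\<lambda>e t. y e t - y' e t) \<in> dbar0 G ` {f. A00 G f}"
proof (rule dbar0_image_if_orthogonal)
  show "A01 G (\<lambda>e t. y e t - y' e t)"
    using A10_lin[of y y' 1 "-1"] y y' by (simp add: A01_def)
  fix h assume "circulation h"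
  then show "(\<Sum>e\<in>edges G. h e * edge_integral (\<lambda>e t. y e t - y' e t) e) = 0"
    using eq y y' A10_smooth[of y] A10_smooth[of y']
    by (simp add: A01_def edge_integral_diff smooth_cl_integrable right_diff_distrib sum_subtractf)
qed

lemma
  assumes \<Omega>: "A11 G \<Omega>"
  shows A11_bump_form_edge_integral: "A11 G (bump_form (edge_integral \<Omega>))"
    and A11_diff_bump_form_in_dbar1_image:
      "(\<lambda>e t. \<Omega> e t - bump_form (edge_integral \<Omega>) e t) \<in> dbar1 G ` {\<alpha>. A10 G \<alpha>}"
proof -
  show S: "A11 G (bump_form (edge_integral \<Omega>))"
    by (rule A11_bump_form) (rule edge_integral_A11_rev[OF \<Omega>])
  show "(\<lambda>e t. \<Omega> e t - bump_form (edge_integral \<Omega>) e t) \<in> dbar1 G ` {\<alpha>. A10 G \<alpha>}"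
    by (rule dbar1_image_diff[OF \<Omega> S]) (simp add: edge_integral_bump_form)
qed

lemma
  assumes \<beta>: "A01 G \<beta>"
  shows A01_bump_form_edge_integral: "A01 G (bump_form (edge_integral \<beta>))"
    and A01_diff_bump_form_in_dbar0_image:
      "(\<lambda>e t. \<beta> e t - bump_form (edge_integral \<beta>) e t) \<in> dbar0 G ` {f. A00 G f}"
proof -
  have "antisymmetric (edge_integral \<beta>)"
    using \<beta> edge_integral_A10_rev by (simp add: antisymmetric_def A01_def)
  then show S: "A01 G (bump_form (edge_integral \<beta>))"
    using A10_bump_form by (simp add: A01_def)
  show "(\<lambda>e t. \<beta> e t - bump_form (edge_integral \<beta>) e t) \<in> dbar0 G ` {f. A00 G f}"
    by (rule dbar0_image_diff[OF \<beta> S]) (simp add: edge_integral_bump_form)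
qed

section \<open>The pairing between \<open>H\<^sup>0\<^sup>,\<^sup>0\<close> and \<open>H\<^sup>1\<^sup>,\<^sup>1\<close>\<close>

lemma integral_graph_form00_bump_form:
  "integral_graph G (wedge (form00 a) (bump_form c)) = (\<Sum>x\<in>edges G. weight x * a (tail G x) * c x) / 2"
  by (simp add: integral_graph_form00 edge_integral_bump_form)

lemma sum_weight_sym_indicator:
  assumes "locally_constant a" "e \<in> edges G"
  shows "(\<Sum>x\<in>edges G. weight x * a (tail G x) * sym_indicator e x) = 2 * (weight e * a (tail G e))"
  using sum_sym_indicator[OF assms(2), of "\<lambda>x. weight x * a (tail G x)"] assms
  by (simp add: locally_constant_def)

lemma integral_graph_form00_bump_form_sym_indicator:
  "locally_constant a \<Longrightarrow> e \<in> edges G \<Longrightarrow>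
    integral_graph G (wedge (form00 a) (bump_form (sym_indicator e))) = weight e * a (tail G e)"
  by (simp add: integral_graph_form00_bump_form sum_weight_sym_indicator)

lemma A11_bump_form_sym_indicator: "e \<in> edges G \<Longrightarrow> A11 G (bump_form (sym_indicator e))"
  by (simp add: A11_bump_form sym_indicator_rev)

lemma bump_form_symmetric_expansion:
  assumes "\<And>x. x \<in> edges G \<Longrightarrow> c (rev G x) = c x"
  shows "bump_form c = (\<lambda>x t. \<Sum>e\<in>edges G. c e / 2 * bump_form (sym_indicator e) x t)"
  unfolding bump_form_sum[symmetric]
  by (rule bump_form_cong, rule sum_sym_indicator_symmetric[where c=c, OF assms, symmetric])

text \<open>Normalized bumps on two edges with a common tail differ by an exact form: their difference
  pairs to zero with every locally constant function.\<close>

lemma bump_ratio_eq_at_vertex: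
  assumes \<phi>: "lin_fun_on {\<Omega>. A11 G \<Omega>} \<phi>" and \<phi>0: "\<forall>n\<in>dbar1 G ` {\<alpha>. A10 G \<alpha>}. \<phi> n = 0"
    and e: "e \<in> edges G" and e': "e' \<in> edges G" and tails: "tail G e = tail G e'"
  shows "\<phi> (bump_form (sym_indicator e)) / weight e = \<phi> (bump_form (sym_indicator e')) / weight e'"
proof -
  let ?c = "\<lambda>x. (1 / weight e) * sym_indicator e x + (- 1 / weight e') * sym_indicator e' x"
  have "A11 G (bump_form ?c)"
    using e e' sym_indicator_rev by (intro A11_bump_form) simp
  moreover have "(\<Sum>x\<in>edges G. weight x * a (tail G x) * edge_integral (bump_form ?c) x) = 0"
    if "locally_constant a" for a
  proof -
    have "(\<Sum>x\<in>edges G. weight x * a (tail G x) * edge_integral (bump_form ?c) x) =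
        (\<Sum>x\<in>edges G. weight x * a (tail G x) * sym_indicator e x) / weight e -
        (\<Sum>x\<in>edges G. weight x * a (tail G x) * sym_indicator e' x) / weight e'"
      by (simp add: edge_integral_bump_form algebra_simps sum_subtractf sum_divide_distrib)
    then show ?thesis
      using sum_weight_sym_indicator[OF that e] sum_weight_sym_indicator[OF that e'] e e' tails by simp
  qed
  ultimately have "\<phi> (bump_form ?c) = 0"
    using \<phi>0 dbar1_image_if_orthogonal by blast
  moreover have "\<phi> (bump_form ?c) =
      (1 / weight e) * \<phi> (bump_form (sym_indicator e)) +
      (- 1 / weight e') * \<phi> (bump_form (sym_indicator e'))"
    unfolding bump_form_lin using A11_bump_form_sym_indicator e e'
    by (intro lin_fun_on_lin[OF form_subspace_A11 \<phi>]) simp_all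
  ultimately show ?thesis
    by simp
qed

lemma pairing00_represents:
  assumes \<phi>: "lin_fun_on {\<Omega>. A11 G \<Omega>} \<phi>" and \<phi>0: "\<forall>n\<in>dbar1 G ` {\<alpha>. A10 G \<alpha>}. \<phi> n = 0"
  shows "\<exists>!k. k \<in> H00 G \<and> (\<forall>y\<in>{\<Omega>. A11 G \<Omega>}. integral_graph G (wedge k y) = \<phi> y)"
proof -
  let ?b = "\<lambda>e. bump_form (sym_indicator e)"
  define a where "a v = \<phi> (?b (some_out_edge v)) / weight (some_out_edge v)" for v
  have \<phi>_b: "\<phi> (?b e) = weight e * a (tail G e)" if e: "e \<in> edges G" for e
  proof -
    have "\<phi> (?b e) / weight e = a (tail G e)"
      using bump_ratio_eq_at_vertex[OF \<phi> \<phi>0 e some_out_edge(1)[OF out_edges_tail_nonempty[OF e]]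
          some_out_edge(2)[OF out_edges_tail_nonempty[OF e], symmetric]]
      by (simp add: a_def)
    then show ?thesis
      using weight_pos[OF e] by (simp add: field_simps)
  qed
  have a: "locally_constant a"
    unfolding locally_constant_def
  proof
    fix e assume e: "e \<in> edges G"
    show "a (tail G e) = a (head G e)"
      using \<phi>_b[OF e] \<phi>_b[of "rev G e"] e by (simp add: sym_indicator_of_rev)
  qed
  have rep: "integral_graph G (wedge (form00 a) \<Omega>) = \<phi> \<Omega>" if \<Omega>: "A11 G \<Omega>" for \<Omega>
  proof -
    have "\<phi> \<Omega> = \<phi> (bump_form (edge_integral \<Omega>))"
      using \<phi>0 A11_diff_bump_form_in_dbar1_image[OF \<Omega>] A11_bump_form_edge_integral[OF \<Omega>] \<Omega>
      by (intro lin_fun_on_eq_if_diff_eq_0[OF form_subspace_A11 \<phi>]) auto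
    also have "bump_form (edge_integral \<Omega>) = (\<lambda>x t. \<Sum>e\<in>edges G. edge_integral \<Omega> e / 2 * ?b e x t)"
      by (rule bump_form_symmetric_expansion) (rule edge_integral_A11_rev[OF \<Omega>])
    also have "\<phi> \<dots> = (\<Sum>e\<in>edges G. edge_integral \<Omega> e / 2 * \<phi> (?b e))"
      using A11_bump_form_sym_indicator
      by (intro conjunct2[OF lin_fun_on_sum[OF form_subspace_A11 \<phi> finite_edges]]) simp
    also have "\<dots> = integral_graph G (wedge (form00 a) \<Omega>)"
      unfolding integral_graph_form00 sum_divide_distrib by (intro sum.cong) (simp_all add: \<phi>_b)
    finally show ?thesis ..
  qed
  show ?thesis
  proof (rule ex1I[of _ "form00 a"])
    show "form00 a \<in> H00 G \<and> (\<forall>y\<in>{\<Omega>. A11 G \<Omega>}. integral_graph G (wedge (form00 a) y) = \<phi> y)"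
      using form00_in_H00[OF a] rep by simp
  next
    fix k assume k: "k \<in> H00 G \<and> (\<forall>y\<in>{\<Omega>. A11 G \<Omega>}. integral_graph G (wedge k y) = \<phi> y)"
    then obtain b where b: "locally_constant b" and kb: "k = form00 b"
      using H00_imp_form00 by blast
    have "weight e * b (tail G e) = weight e * a (tail G e)" if e: "e \<in> edges G" for e
      using k kb e A11_bump_form_sym_indicator[OF e] \<phi>_b[OF e]
        integral_graph_form00_bump_form_sym_indicator[OF b e]
      by simp
    then show "k = form00 a"
      unfolding kb by (intro form00_eqI) simp
  qed
qed

lemma pairing00_surjective:
  assumes ni: "no_isolated_vertices G" and \<psi>: "lin_fun_on (H00 G) \<psi>"
  shows "\<exists>y\<in>{\<Omega>. A11 G \<Omega>}. \<forall>k\<in>H00 G. integral_graph G (wedge k y) = \<psi> k"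
proof -
  obtain z where z: "\<And>v. locally_constant (z v)"
    and z_rep: "\<And>a u. locally_constant a \<Longrightarrow> u \<in> verts G \<Longrightarrow> a u = (\<Sum>v\<in>verts G. a v * z v u)"
    using locally_constant_reproducing_family by blast
  let ?ev = some_out_edge
  have ev: "?ev v \<in> edges G" "tail G (?ev v) = v" if "v \<in> verts G" for v
  proof -
    have "out_edges G v \<noteq> {}"
      using ni that by (auto simp: no_isolated_vertices_def valency_def)
    then show "?ev v \<in> edges G" "tail G (?ev v) = v"
      by (rule some_out_edge)+
  qed
  txt \<open>A bump at each vertex \<open>v\<close>, weighted so that pairing with \<open>form00 a\<close> picks out
    \<open>a v * \<psi> (form00 (z v))\<close>; these sum to \<open>\<psi> (form00 a)\<close> by the reproducing property.\<close>
  define d where "d v = \<psi> (form00 (z v)) / weight (?ev v)" for v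
  define \<Omega> where "\<Omega> = bump_form (\<lambda>x. \<Sum>v\<in>verts G. d v * sym_indicator (?ev v) x)"
  have "A11 G \<Omega>"
    unfolding \<Omega>_def using ev sym_indicator_rev by (intro A11_bump_form) simp
  moreover have "integral_graph G (wedge k \<Omega>) = \<psi> k" if k: "k \<in> H00 G" for k
  proof -
    obtain a where a: "locally_constant a" and ka: "k = form00 a"
      using H00_imp_form00[OF k] by blast
    have "integral_graph G (wedge k \<Omega>) =
        (\<Sum>v\<in>verts G. d v * (\<Sum>x\<in>edges G. weight x * a (tail G x) * sym_indicator (?ev v) x)) / 2"
      unfolding ka \<Omega>_def integral_graph_form00_bump_form sum_distrib_left
      by (simp add: sum.swap[of _ "edges G"] mult_ac)
    also have "\<dots> = (\<Sum>v\<in>verts G. 2 * (a v * \<psi> (form00 (z v)))) / 2"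
      using ev sum_weight_sym_indicator[OF a]
      by (intro arg_cong[where f="\<lambda>x. x / 2"] sum.cong) (simp_all add: d_def)
    also have "\<dots> = (\<Sum>v\<in>verts G. a v * \<psi> (form00 (z v)))"
      by (simp add: sum_distrib_left[symmetric])
    also have "\<dots> = \<psi> (\<lambda>e t. \<Sum>v\<in>verts G. a v * form00 (z v) e t)"
      using form00_in_H00[OF z]
      by (intro conjunct2[OF lin_fun_on_sum[OF form_subspace_H00 \<psi> finite_verts], symmetric])
    also have "(\<lambda>e t. \<Sum>v\<in>verts G. a v * form00 (z v) e t) = k"
      unfolding form00_sum ka by (rule form00_eqI) (simp add: z_rep[OF a])
    finally show ?thesis .
  qed
  ultimately show ?thesis
    by blast
qed

lemma perfect_pairing_H00_A11:
  assumes "no_isolated_vertices G"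
  shows "perfect_pairing (H00 G) {\<Omega>. A11 G \<Omega>} (dbar1 G ` {\<alpha>. A10 G \<alpha>})
           (\<lambda>f \<Omega>. integral_graph G (wedge f \<Omega>))"
proof (rule perfect_pairingI)
  fix k n assume "k \<in> H00 G" "n \<in> dbar1 G ` {\<alpha>. A10 G \<alpha>}"
  then show "integral_graph G (wedge k n) = 0"
    by (auto elim!: H00_imp_form00 simp: integral_graph_form00 sum_weighted_edge_integral_dbar1)
next
  fix y y' assume y: "y \<in> {\<Omega>. A11 G \<Omega>}" "y' \<in> {\<Omega>. A11 G \<Omega>}"
    and eq: "\<forall>k\<in>H00 G. integral_graph G (wedge k y) = integral_graph G (wedge k y')"
  show "(\<lambda>e t. y e t - y' e t) \<in> dbar1 G ` {\<alpha>. A10 G \<alpha>}"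
  proof (rule dbar1_image_diff)
    fix a assume "locally_constant a"
    then have "integral_graph G (wedge (form00 a) y) = integral_graph G (wedge (form00 a) y')"
      using eq form00_in_H00 by blast
    then show "(\<Sum>e\<in>edges G. weight e * a (tail G e) * edge_integral y e) =
        (\<Sum>e\<in>edges G. weight e * a (tail G e) * edge_integral y' e)"
      by (simp add: integral_graph_form00)
  qed (use y in auto)
qed (use pairing00_represents pairing00_surjective[OF assms] in auto)

section \<open>The pairing between \<open>H\<^sup>1\<^sup>,\<^sup>0\<close> and \<open>H\<^sup>0\<^sup>,\<^sup>1\<close>\<close>

lemma integral_graph_form10_bump_form:
  "integral_graph G (wedge (form10 h) (bump_form c)) = (\<Sum>x\<in>edges G. h x * c x) / 2"
  by (simp add: integral_graph_form10 edge_integral_bump_form)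

lemma A01_bump_form_signed_indicator: "e \<in> edges G \<Longrightarrow> A01 G (bump_form (signed_indicator e))"
  by (simp add: A01_def A10_bump_form antisymmetric_signed_indicator)

lemma integral_graph_form10_bump_form_signed_indicator:
  "antisymmetric h \<Longrightarrow> e \<in> edges G \<Longrightarrow>
    integral_graph G (wedge (form10 h) (bump_form (signed_indicator e))) = h e"
  using sum_signed_indicator_at[of e h] by (simp add: integral_graph_form10_bump_form antisymmetric_def)

lemma bump_form_antisymmetric_expansion:
  assumes "antisymmetric c"
  shows "bump_form c = (\<lambda>x t. \<Sum>e\<in>edges G. c e / 2 * bump_form (signed_indicator e) x t)"
  unfolding bump_form_sum[symmetric]
  by (rule bump_form_cong, rule sum_signed_indicator_antisymmetric[OF assms, symmetric])

lemma lin_fun_on_A01_bump_form: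
  assumes \<phi>: "lin_fun_on {\<beta>. A01 G \<beta>} \<phi>" and c: "antisymmetric c"
  shows "\<phi> (bump_form c) = (\<Sum>e\<in>edges G. c e / 2 * \<phi> (bump_form (signed_indicator e)))"
  unfolding bump_form_antisymmetric_expansion[OF c] using A01_bump_form_signed_indicator
  by (intro conjunct2[OF lin_fun_on_sum[OF form_subspace_A01 \<phi> finite_edges]]) simp

text \<open>The divergence vanishes because the bump form of a gradient is exact.\<close>

lemma bump_values_circulation:
  assumes \<phi>: "lin_fun_on {\<beta>. A01 G \<beta>} \<phi>" and \<phi>0: "\<forall>n\<in>dbar0 G ` {f. A00 G f}. \<phi> n = 0"
  shows "circulation (\<lambda>e. \<phi> (bump_form (signed_indicator e)))"
proof -
  let ?g = "\<lambda>e. \<phi> (bump_form (signed_indicator e))"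
  have g_anti: "antisymmetric ?g"
    unfolding antisymmetric_def
  proof
    fix e assume e: "e \<in> edges G"
    have "bump_form (signed_indicator (rev G e)) = (\<lambda>x t. -1 * bump_form (signed_indicator e) x t)"
      using e by (simp add: signed_indicator_of_rev bump_form_def fun_eq_iff)
    then show "?g (rev G e) = - ?g e"
      using lin_fun_on_lin[OF form_subspace_A01 \<phi>, of "bump_form (signed_indicator e)" _ "-1" 0]
        A01_bump_form_signed_indicator[OF e]
      by simp
  qed
  have "divergence ?g v = 0" if v: "v \<in> verts G" for v
  proof -
    let ?\<beta> = "bump_form (gradient (indicator {v}))"
    have "A01 G ?\<beta>"
      by (simp add: A01_def A10_bump_form antisymmetric_gradient)
    moreover have "(\<Sum>e\<in>edges G. h e * edge_integral ?\<beta> e) = 0" if "circulation h" for h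
      using that inner_on_gradient[of h "indicator {v}"]
      by (simp add: edge_integral_bump_form inner_on_def circulation_def)
    ultimately have "\<phi> ?\<beta> = 0"
      using \<phi>0 dbar0_image_if_orthogonal by blast
    then have "inner_on (edges G) ?g (gradient (indicator {v})) = 0"
      using lin_fun_on_A01_bump_form[OF \<phi> antisymmetric_gradient]
      by (simp add: inner_on_def sum_divide_distrib[symmetric] mult.commute)
    then show ?thesis
      using inner_gradient_indicator[OF g_anti v] by simp
  qed
  then show ?thesis
    using g_anti by (simp add: circulation_def)
qed

lemma pairing10_represents:
  assumes \<phi>: "lin_fun_on {\<beta>. A01 G \<beta>} \<phi>" and \<phi>0: "\<forall>n\<in>dbar0 G ` {f. A00 G f}. \<phi> n = 0"
  shows "\<exists>!k. k \<in> H10 G \<and> (\<forall>y\<in>{\<beta>. A01 G \<beta>}. integral_graph G (wedge k y) = \<phi> y)"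
proof -
  let ?b = "\<lambda>e. bump_form (signed_indicator e)"
  define g where "g e = \<phi> (?b e)" for e
  have g: "circulation g"
    unfolding g_def by (rule bump_values_circulation[OF \<phi> \<phi>0])
  have rep: "integral_graph G (wedge (form10 g) \<beta>) = \<phi> \<beta>" if \<beta>: "A01 G \<beta>" for \<beta>
  proof -
    have "\<phi> \<beta> = \<phi> (bump_form (edge_integral \<beta>))"
      using \<phi>0 A01_diff_bump_form_in_dbar0_image[OF \<beta>] A01_bump_form_edge_integral[OF \<beta>] \<beta>
      by (intro lin_fun_on_eq_if_diff_eq_0[OF form_subspace_A01 \<phi>]) auto
    also have "\<dots> = integral_graph G (wedge (form10 g) \<beta>)"
      using \<beta> edge_integral_A10_rev lin_fun_on_A01_bump_form[OF \<phi>]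
      by (simp add: A01_def antisymmetric_def integral_graph_form10 sum_divide_distrib g_def mult.commute)
    finally show ?thesis ..
  qed
  show ?thesis
  proof (rule ex1I[of _ "form10 g"])
    show "form10 g \<in> H10 G \<and> (\<forall>y\<in>{\<beta>. A01 G \<beta>}. integral_graph G (wedge (form10 g) y) = \<phi> y)"
      using form10_in_H10[OF g] rep by simp
  next
    fix k assume k: "k \<in> H10 G \<and> (\<forall>y\<in>{\<beta>. A01 G \<beta>}. integral_graph G (wedge k y) = \<phi> y)"
    then obtain h where h: "circulation h" and kh: "k = form10 h"
      using H10_imp_form10 by blast
    have "h e = g e" if e: "e \<in> edges G" for e
    proof -
      have "integral_graph G (wedge (form10 h) (?b e)) = \<phi> (?b e)"
        using k kh A01_bump_form_signed_indicator[OF e] by simp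
      then show ?thesis
        using integral_graph_form10_bump_form_signed_indicator[of h e] h e
        by (simp add: circulation_def g_def)
    qed
    then show "k = form10 g"
      unfolding kh by (rule form10_eqI)
  qed
qed

lemma pairing10_surjective:
  assumes \<psi>: "lin_fun_on (H10 G) \<psi>"
  shows "\<exists>y\<in>{\<beta>. A01 G \<beta>}. \<forall>k\<in>H10 G. integral_graph G (wedge k y) = \<psi> k"
proof -
  obtain z where z: "\<And>e. e \<in> edges G \<Longrightarrow> circulation (z e)"
    and z_rep: "\<And>h x. circulation h \<Longrightarrow> x \<in> edges G \<Longrightarrow> h x = (\<Sum>e\<in>edges G. h e / 2 * z e x)"
    using circulation_reproducing_family by blast
  define L where "L e = \<psi> (form10 (z e))" for e
  define \<beta> where "\<beta> = bump_form (\<lambda>x. \<Sum>e\<in>edges G. L e / 2 * signed_indicator e x)"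
  have "A01 G \<beta>"
    unfolding \<beta>_def A01_def
    by (intro A10_bump_form antisymmetric_sum antisymmetric_signed_indicator)
  moreover have "integral_graph G (wedge k \<beta>) = \<psi> k" if k: "k \<in> H10 G" for k
  proof -
    obtain h where h: "circulation h" and kh: "k = form10 h"
      using H10_imp_form10[OF k] by blast
    have "(\<Sum>x\<in>edges G. h x * (\<Sum>e\<in>edges G. L e / 2 * signed_indicator e x)) =
        (\<Sum>x\<in>edges G. \<Sum>e\<in>edges G. L e / 2 * (h x * signed_indicator e x))"
      by (rule sum.cong[OF refl]) (simp add: sum_distrib_left mult.left_commute)
    also have "\<dots> = (\<Sum>e\<in>edges G. L e / 2 * (\<Sum>x\<in>edges G. h x * signed_indicator e x))"
      by (subst sum.swap) (simp add: sum_distrib_left)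
    finally have "integral_graph G (wedge k \<beta>) =
        (\<Sum>e\<in>edges G. L e / 2 * (\<Sum>x\<in>edges G. h x * signed_indicator e x)) / 2"
      unfolding kh \<beta>_def integral_graph_form10_bump_form by simp
    also have "\<dots> = (\<Sum>e\<in>edges G. 2 * (h e / 2 * L e)) / 2"
      using h sum_signed_indicator_at
      by (intro arg_cong[where f="\<lambda>x. x / 2"] sum.cong) (simp_all add: circulation_def antisymmetric_def)
    also have "\<dots> = (\<Sum>e\<in>edges G. h e / 2 * L e)"
      by (subst sum_distrib_left[symmetric]) simp
    also have "\<dots> = \<psi> (\<lambda>x t. \<Sum>e\<in>edges G. h e / 2 * form10 (z e) x t)"
      unfolding L_def using form10_in_H10 z
      by (intro conjunct2[OF lin_fun_on_sum[OF form_subspace_H10 \<psi> finite_edges], symmetric]) simp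
    also have "(\<lambda>x t. \<Sum>e\<in>edges G. h e / 2 * form10 (z e) x t) = k"
      unfolding form10_sum kh by (rule form10_eqI) (simp add: z_rep[OF h])
    finally show ?thesis .
  qed
  ultimately show ?thesis
    by blast
qed

lemma perfect_pairing_H10_A01:
  "perfect_pairing (H10 G) {\<beta>. A01 G \<beta>} (dbar0 G ` {f. A00 G f})
     (\<lambda>\<alpha> \<beta>. integral_graph G (wedge \<alpha> \<beta>))"
proof (rule perfect_pairingI)
  fix k n assume "k \<in> H10 G" "n \<in> dbar0 G ` {f. A00 G f}"
  then show "integral_graph G (wedge k n) = 0"
    by (auto elim!: H10_imp_form10 simp: integral_graph_form10 sum_edge_integral_dbar0)
next
  fix y y' assume y: "y \<in> {\<beta>. A01 G \<beta>}" "y' \<in> {\<beta>. A01 G \<beta>}"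
    and eq: "\<forall>k\<in>H10 G. integral_graph G (wedge k y) = integral_graph G (wedge k y')"
  show "(\<lambda>e t. y e t - y' e t) \<in> dbar0 G ` {f. A00 G f}"
  proof (rule dbar0_image_diff)
    fix h assume "circulation h"
    then have "integral_graph G (wedge (form10 h) y) = integral_graph G (wedge (form10 h) y')"
      using eq form10_in_H10 by blast
    then show "(\<Sum>e\<in>edges G. h e * edge_integral y e) = (\<Sum>e\<in>edges G. h e * edge_integral y' e)"
      by (simp add: integral_graph_form10)
  qed (use y in auto)
qed (use pairing10_represents pairing10_surjective in auto)

end

theorem proposition2p18:
  fixes G :: "('v, 'e) wmgraph"
  assumes "wmg G"
    and "no_isolated_vertices G"
  shows "perfect_pairing (H00 G) {\<Omega>. A11 G \<Omega>} (dbar1 G ` {\<alpha>. A10 G \<alpha>})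
           (\<lambda>f \<Omega>. integral_graph G (wedge f \<Omega>))
       \<and> perfect_pairing (H10 G) {\<beta>. A01 G \<beta>} (dbar0 G ` {f. A00 G f})
           (\<lambda>\<alpha> \<beta>. integral_graph G (wedge \<alpha> \<beta>))"
proof -
  interpret weighted_graph G
    by (rule weighted_graph.intro[OF assms(1)])
  show ?thesis
    using perfect_pairing_H00_A11[OF assms(2)] perfect_pairing_H10_A01 by (rule conjI)
qed

end
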